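(* Let $f$ be $L$-smooth, bounded below by $f^*$, with unbiased stochastic gradients of variance at most $\sigma^2$ (see context). Consider Local SGD with parameter $B\in\mathbb{N}$ (see context) and its main branch $\{x^k\}_{k\ge0}$. With step size $\gamma=\min\{\frac{1}{2BL},\frac{\varepsilon}{4\sigma^2L}\}$ and $\Delta=f(x^0)-f^*$, we have $\frac1K\sum_{k=0}^{K-1}\mathbb{E}[\|\nabla f(x^k)\|^2]\le\varepsilon$ for all $K\ge\frac{4BL\Delta}{\varepsilon}+\frac{8\sigma^2L\Delta}{\varepsilon^2}$.
   Context: Assumptions: $f:\mathbb{R}^d\to\mathbb{R}$ is differentiable with $\|\nabla f(x)-\nabla f(y)\|\le L\|x-y\|$; $f(x)\ge f^*$ for all $x$; stochastic gradients $\nabla f(x;\xi)$, $\xi\sim\mathcal{D}_\xi$, satisfy $\mathbb{E}_\xi[\nabla f(x;\xi)]=\nabla f(x)$ and $\mathbb{E}_\xi\|\nabla f(x;\xi)-\nabla f(x)\|^2\le\sigma^2$. Local SGD with $n$ workers: in round $k=0,1,\dots$ the server broadcasts $w^k$ ($w^0$ given); each worker $i$ sets $z^{k,0}_i=w^k$ and repeatedly performs $z^{k,j+1}_i=z^{k,j}_i-\gamma\nabla f(z^{k,j}_i;\eta^{k,j}_i)$ with fresh i.i.d. samples $\eta^{k,j}_i\sim\mathcal{D}_\xi$, counting its completed local steps $M_i$. The server waits until $\sum_{i=1}^nM_i=B$, stops the workers, and sets $w^{k+1}=w^k-\gamma\sum_{i=1}^n\sum_{j=0}^{M_i-1}\nabla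 f(z^{k,j}_i;\eta^{k,j}_i)$. Main branch: $x^0=w^0$ and, in round $k$, starting from $x^{kB}=w^k$, the $B$ gradients of the round are applied one at a time (worker $1$'s gradients in order $j=0,\dots,M_1-1$, then worker 2's, ..., then worker $n$'s): $x^{t+1}=x^t-\gamma g_t$ where $g_t$ is the next gradient in this order; thus $x^{(k+1)B}=w^{k+1}$. *)

theory Defs
  imports "HOL-Probability.Probability"
begin

text \<open>Noise samples are indexed by (round k, worker i, local step j);
  a sample path is \<open>\<omega> :: nat \<times> nat \<times> nat \<Rightarrow> 'b\<close>, drawn from the i.i.d. product measure.
  Workers are numbered 0..n-1 (paper: 1..n). \<open>M k i\<close> is the number of local steps
  completed by worker i in round k.\<close>

primrec local_iter :: "('a::real_vector \<Rightarrow> 'b \<Rightarrow> 'a) \<Rightarrow> real \<Rightarrow> 'a \<Rightarrow> (nat \<Rightarrow> 'b) \<Rightarrow> nat \<Rightarrow> 'a" where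
  "local_iter g \<gamma> w eta 0 = w"
| "local_iter g \<gamma> w eta (Suc j) =
     local_iter g \<gamma> w eta j - \<gamma> *\<^sub>R g (local_iter g \<gamma> w eta j) (eta j)"

primrec server_iter :: "('a::real_vector \<Rightarrow> 'b \<Rightarrow> 'a) \<Rightarrow> real \<Rightarrow> nat \<Rightarrow> (nat \<Rightarrow> nat \<Rightarrow> nat)
    \<Rightarrow> 'a \<Rightarrow> (nat \<times> nat \<times> nat \<Rightarrow> 'b) \<Rightarrow> nat \<Rightarrow> 'a" where
  "server_iter g \<gamma> n M w0 \<omega> 0 = w0"
| "server_iter g \<gamma> n M w0 \<omega> (Suc k) =
     server_iter g \<gamma> n M w0 \<omega> k - \<gamma> *\<^sub>R (\<Sum>i<n. \<Sum>j<M k i.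
        g (local_iter g \<gamma> (server_iter g \<gamma> n M w0 \<omega> k) (\<lambda>l. \<omega> (k, i, l)) j) (\<omega> (k, i, j)))"

text \<open>Order in which the gradients of round k are applied on the main branch:
  worker 0's steps j = 0..M-1, then worker 1's, etc.\<close>
definition round_order :: "nat \<Rightarrow> (nat \<Rightarrow> nat \<Rightarrow> nat) \<Rightarrow> nat \<Rightarrow> (nat \<times> nat) list" where
  "round_order n M k = concat (map (\<lambda>i. map (\<lambda>j. (i, j)) [0..<M k i]) [0..<n])"

definition round_grad :: "('a::real_vector \<Rightarrow> 'b \<Rightarrow> 'a) \<Rightarrow> real \<Rightarrow> nat \<Rightarrow> (nat \<Rightarrow> nat \<Rightarrow> nat)
    \<Rightarrow> 'a \<Rightarrow> (nat \<times> nat \<times> nat \<Rightarrow> 'b) \<Rightarrow> nat \<Rightarrow> nat \<Rightarrow> 'a" where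
  "round_grad g \<gamma> n M w0 \<omega> k r =
     (let i = fst (round_order n M k ! r); j = snd (round_order n M k ! r) in
      g (local_iter g \<gamma> (server_iter g \<gamma> n M w0 \<omega> k) (\<lambda>l. \<omega> (k, i, l)) j) (\<omega> (k, i, j)))"

text \<open>Main branch inside round k: x^{kB} = w^k, x^{kB+r+1} = x^{kB+r} - gamma g_{kB+r}.\<close>
primrec round_partial :: "('a::real_vector \<Rightarrow> 'b \<Rightarrow> 'a) \<Rightarrow> real \<Rightarrow> nat \<Rightarrow> (nat \<Rightarrow> nat \<Rightarrow> nat)
    \<Rightarrow> 'a \<Rightarrow> (nat \<times> nat \<times> nat \<Rightarrow> 'b) \<Rightarrow> nat \<Rightarrow> nat \<Rightarrow> 'a" where
  "round_partial g \<gamma> n M w0 \<omega> k 0 = server_iter g \<gamma> n M w0 \<omega> k"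
| "round_partial g \<gamma> n M w0 \<omega> k (Suc r) =
     round_partial g \<gamma> n M w0 \<omega> k r - \<gamma> *\<^sub>R round_grad g \<gamma> n M w0 \<omega> k r"

definition main_branch :: "('a::real_vector \<Rightarrow> 'b \<Rightarrow> 'a) \<Rightarrow> real \<Rightarrow> nat \<Rightarrow> (nat \<Rightarrow> nat \<Rightarrow> nat)
    \<Rightarrow> nat \<Rightarrow> 'a \<Rightarrow> (nat \<times> nat \<times> nat \<Rightarrow> 'b) \<Rightarrow> nat \<Rightarrow> 'a" where
  "main_branch g \<gamma> n M B w0 \<omega> t = round_partial g \<gamma> n M w0 \<omega> (t div B) (t mod B)"

text \<open>Step size min{1/(2BL), eps/(4 sigma^2 L)}, with the convention that the second
  term is +infinity when sigma = 0.\<close>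
definition lsgd_stepsize :: "nat \<Rightarrow> real \<Rightarrow> real \<Rightarrow> real \<Rightarrow> real" where
  "lsgd_stepsize B L \<sigma> \<epsilon> =
     (if \<sigma>\<^sup>2 = 0 then 1 / (2 * real B * L) else min (1 / (2 * real B * L)) (\<epsilon> / (4 * \<sigma>\<^sup>2 * L)))"

end

(*
  Along the main branch, x^(t+1) = x^t - gamma g_t, where g_t is a stochastic gradient taken at a
  stale point z_t (the local iterate of the worker that produced it) with a fresh sample that is
  independent of everything before step t. Integrating out that sample first, the descent lemma gives

    gamma/2 E|grad f(x^t)|^2 + gamma/2 (1 - L gamma) E|grad f(z_t)|^2
      <= E f(x^t) - E f(x^(t+1)) + gamma/2 E|grad f(x^t) - grad f(z_t)|^2 + L gamma^2 sigma^2/2.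

  The drift x^t - z_t is gamma times the sum of fewer than B gradients applied earlier in the same
  round, so L-smoothness and the orthogonality of the independent noise terms bound the last
  expectation by 2 L^2 gamma^2 (B - 1) (sum of E|grad f(z_s)|^2 over those s, plus sigma^2); summed
  over t, each s is counted at most B - 1 times. Together with
  |grad f(x^t)|^2 <= 2 |grad f(z_t)|^2 + 2 |grad f(x^t) - grad f(z_t)|^2 this gives three linear
  inequalities between the summed expectations, and a suitable weighted combination of them yields
  the bound for the given step size and number of steps.
*)

theory Submission
  imports Defs
begin


lemma descent_lemma:
  fixes f :: "'a::real_inner \<Rightarrow> real"
  assumes deriv: "\<And>x. (f has_derivative (\<lambda>h. df x \<bullet> h)) (at x)"
    and lipschitz: "\<And>x y. norm (df x - df y) \<le> L * norm (x - y)"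
  shows "f y \<le> f x + df x \<bullet> (y - x) + L / 2 * (norm (y - x))\<^sup>2"
proof -
  define h where "h = y - x"
  define \<phi> where "\<phi> s = f (x + s *\<^sub>R h) - s * (df x \<bullet> h) - L / 2 * s\<^sup>2 * (norm h)\<^sup>2" for s
  define \<phi>' where "\<phi>' s = (df (x + s *\<^sub>R h) - df x) \<bullet> h - L * s * (norm h)\<^sup>2" for s
  have "((\<lambda>s. f (x + s *\<^sub>R h)) has_real_derivative df (x + s *\<^sub>R h) \<bullet> h) (at s)" for s
  proof -
    have "((\<lambda>s. x + s *\<^sub>R h) has_derivative (\<lambda>t. t *\<^sub>R h)) (at s)"
      by (auto intro!: derivative_eq_intros)
    from diff_chain_at[OF this deriv] show ?thesis
      unfolding has_field_derivative_def o_def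
      by (rule has_derivative_eq_rhs) (simp add: fun_eq_iff)
  qed
  then have \<phi>_deriv: "(\<phi> has_real_derivative \<phi>' s) (at s)" for s
    unfolding \<phi>_def \<phi>'_def by (auto intro!: derivative_eq_intros simp: inner_diff_left)
  have \<phi>'_nonpos: "\<phi>' s \<le> 0" if "0 \<le> s" for s
  proof -
    have "(df (x + s *\<^sub>R h) - df x) \<bullet> h \<le> norm (df (x + s *\<^sub>R h) - df x) * norm h"
      by (rule norm_cauchy_schwarz)
    also have "\<dots> \<le> L * norm (s *\<^sub>R h) * norm h"
      using lipschitz[of "x + s *\<^sub>R h" x] by (simp add: mult_right_mono)
    also have "\<dots> = L * s * (norm h)\<^sup>2"
      using that by (simp add: power2_eq_square)
    finally show ?thesis unfolding \<phi>'_def by simp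
  qed
  obtain s where "0 < s" "\<phi> 1 - \<phi> 0 = \<phi>' s"
    using MVT2[of 0 1 \<phi> \<phi>'] \<phi>_deriv by auto
  then have "\<phi> 1 \<le> \<phi> 0" using \<phi>'_nonpos[of s] by simp
  then show ?thesis unfolding \<phi>_def h_def by (simp add: algebra_simps)
qed

lemma norm_add_sq_le:
  fixes a b :: "'a::real_inner"
  shows "(norm (a + b))\<^sup>2 \<le> 2 * (norm a)\<^sup>2 + 2 * (norm b)\<^sup>2"
  using zero_le_power2[of "norm (a - b)"]
  by (simp add: power2_norm_eq_inner algebra_simps inner_commute)

lemma norm_sum_sq_le:
  fixes v :: "nat \<Rightarrow> 'a::real_normed_vector"
  shows "(norm (\<Sum>r<m. v r))\<^sup>2 \<le> real m * (\<Sum>r<m. (norm (v r))\<^sup>2)"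
proof -
  have "(norm (\<Sum>r<m. v r))\<^sup>2 \<le> (\<Sum>r<m. norm (v r))\<^sup>2"
    using norm_sum[of v "{..<m}"] by (simp add: power_mono)
  also have "\<dots> \<le> real m * (\<Sum>r<m. (norm (v r))\<^sup>2)"
    using sum_squared_le_sum_of_squares[of "\<lambda>r. norm (v r)" "{..<m}"] by (simp add: mult.commute)
  finally show ?thesis .
qed

lemma sum_lessThan_add:
  fixes F :: "nat \<Rightarrow> 'a::comm_monoid_add"
  shows "(\<Sum>r < a + b. F r) = (\<Sum>r < a. F r) + (\<Sum>r < b. F (a + r))"
  by (induction b) (simp_all add: add.assoc)

lemma sum_earlier_in_block_le:
  fixes b :: "nat \<Rightarrow> real"
  assumes b_nonneg: "\<And>t. 0 \<le> b t" and "0 < B"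
  shows "(\<Sum>t<K. \<Sum>r < t mod B. b (t div B * B + r)) \<le> (real B - 1) * (\<Sum>t<K. b t)"
proof -
  (* Swap the double sum: s is counted once for each later step t of its block. *)
  define later where "later s = {t \<in> {..<K}. t div B * B \<le> s \<and> s < t}" for s
  have later_bound: "card (later s) \<le> B - 1" for s
  proof -
    have "later s \<subseteq> {Suc s..<s div B * B + B}"
    proof
      fix t assume t: "t \<in> later s"
      then have "t div B = s div B"
        using div_le_mono[of "t div B * B" s B] div_le_mono[of s t B] \<open>0 < B\<close>
        by (auto simp: later_def)
      moreover have "t < t div B * B + B"
        using div_mult_mod_eq[of t B] mod_less_divisor[OF \<open>0 < B\<close>, of t] by linarith
      ultimately show "t \<in> {Suc s..<s div B * B + B}" using t by (auto simp: later_def)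
    qed
    then have "card (later s) \<le> s div B * B + B - Suc s"
      using card_mono[of "{Suc s..<s div B * B + B}"] by fastforce
    also have "\<dots> \<le> B - 1"
      using div_mult_mod_eq[of s B] by linarith
    finally show ?thesis .
  qed
  have block_sum: "(\<Sum>r < t mod B. b (t div B * B + r)) = (\<Sum>s \<in> {s \<in> {..<K}. t div B * B \<le> s \<and> s < t}. b s)"
    if "t < K" for t
  proof -
    have "{s \<in> {..<K}. t div B * B \<le> s \<and> s < t} = {t div B * B..<t div B * B + t mod B}"
      using that div_mult_mod_eq[of t B] by auto
    then show ?thesis
      using sum.shift_bounds_nat_ivl[of b 0 "t div B * B" "t mod B"]
      by (simp add: atLeast0LessThan add.commute)
  qed
  have "(\<Sum>t<K. \<Sum>r < t mod B. b (t div B * B + r))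
      = (\<Sum>t<K. \<Sum>s \<in> {s \<in> {..<K}. t div B * B \<le> s \<and> s < t}. b s)"
    by (rule sum.cong[OF refl], rule block_sum) simp
  also have "\<dots> = (\<Sum>s<K. \<Sum>t\<in>later s. b s)"
    unfolding later_def by (rule sum.swap_restrict) auto
  also have "\<dots> \<le> (\<Sum>s<K. (real B - 1) * b s)"
  proof (intro sum_mono)
    fix s
    have "real (card (later s)) \<le> real B - 1"
      using later_bound[of s] \<open>0 < B\<close> by linarith
    then show "(\<Sum>t\<in>later s. b s) \<le> (real B - 1) * b s"
      by (simp add: b_nonneg mult_right_mono)
  qed
  finally show ?thesis by (simp add: sum_distrib_left)
qed

lemma nn_integral_PiM_fresh_coordinate:
  fixes h :: "('i \<Rightarrow> 'b) \<Rightarrow> 'b \<Rightarrow> ennreal"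
  assumes "prob_space D"
    and h_measurable: "(\<lambda>(\<xi>, \<omega>). h \<omega> \<xi>) \<in> borel_measurable (D \<Otimes>\<^sub>M PiM UNIV (\<lambda>_. D))"
    and fresh: "\<And>\<omega> x. h (fun_upd \<omega> j x) = h \<omega>"
  shows "(\<integral>\<^sup>+\<omega>. h \<omega> (\<omega> j) \<partial>PiM UNIV (\<lambda>_. D)) = (\<integral>\<^sup>+\<omega>. (\<integral>\<^sup>+\<xi>. h \<omega> \<xi> \<partial>D) \<partial>PiM UNIV (\<lambda>_. D))"
proof -
  let ?\<Omega> = "PiM (UNIV :: 'i set) (\<lambda>_. D)"
  let ?insert = "\<lambda>(\<xi>, X). X(j := \<xi>)"
  interpret D: prob_space D by fact
  interpret \<Omega>: prob_space ?\<Omega> by (intro prob_space_PiM D.prob_space_axioms)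
  interpret pair_sigma_finite D ?\<Omega> by unfold_locales
  have insert_measurable: "?insert \<in> measurable (D \<Otimes>\<^sub>M ?\<Omega>) ?\<Omega>"
    by (rule measurable_PiM_single') (auto simp: split_beta space_pair_measure space_PiM PiE_iff)
  have "(\<lambda>\<omega>. h \<omega> (\<omega> j)) \<in> borel_measurable ?\<Omega>"
    using measurable_compose[OF _ h_measurable, of "\<lambda>\<omega>. (\<omega> j, \<omega>)"] by simp
  then have "(\<integral>\<^sup>+\<omega>. h \<omega> (\<omega> j) \<partial>?\<Omega>) = (\<integral>\<^sup>+p. h (?insert p) (?insert p j) \<partial>(D \<Otimes>\<^sub>M ?\<Omega>))"
    using nn_integral_distr[OF insert_measurable] distr_pair_PiM_eq_PiM[of UNIV "\<lambda>_. D" j]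
    by (simp add: D.prob_space_axioms)
  also have "\<dots> = (\<integral>\<^sup>+(\<xi>, \<omega>). h \<omega> \<xi> \<partial>(D \<Otimes>\<^sub>M ?\<Omega>))"
    by (intro nn_integral_cong) (auto simp: fresh)
  also have "\<dots> = (\<integral>\<^sup>+\<omega>. (\<integral>\<^sup>+\<xi>. h \<omega> \<xi> \<partial>D) \<partial>?\<Omega>)"
    using nn_integral_snd[OF h_measurable] by simp
  finally show ?thesis .
qed

(* In the application X, Y and Z are gamma times the summed expectations of |grad f(x^t)|^2,
   |grad f(z_t)|^2 and |grad f(x^t) - grad f(z_t)|^2, Delta = f(x^0) - f*, and T = gamma K epsilon. *)

lemma combine_recursions:
  fixes X Y Z \<Delta> N p q \<alpha> :: real
  assumes "0 \<le> \<alpha>" "\<alpha> \<le> 1" "0 \<le> Y"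
    and descent: "X + (1 - q) * Y \<le> 2 * \<Delta> + Z + N"
    and split: "X \<le> 2 * Y + 2 * Z"
    and drift: "Z \<le> 2 * p\<^sup>2 * Y + 2 * p * N"
    and weights: "2 * (1 - \<alpha>) + 2 * (2 - \<alpha>) * p\<^sup>2 \<le> \<alpha> * (1 - q)"
  shows "X \<le> 2 * \<alpha> * \<Delta> + (\<alpha> + 2 * (2 - \<alpha>) * p) * N"
proof -
  have "\<alpha> * (X + (1 - q) * Y) \<le> \<alpha> * (2 * \<Delta> + Z + N)"
    using descent \<open>0 \<le> \<alpha>\<close> by (rule mult_left_mono)
  moreover have "(1 - \<alpha>) * X \<le> (1 - \<alpha>) * (2 * Y + 2 * Z)"
    using split \<open>\<alpha> \<le> 1\<close> by (intro mult_left_mono) auto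
  moreover have "(2 - \<alpha>) * Z \<le> (2 - \<alpha>) * (2 * p\<^sup>2 * Y + 2 * p * N)"
    using drift \<open>\<alpha> \<le> 1\<close> by (intro mult_left_mono) auto
  moreover have "(2 * (1 - \<alpha>) + 2 * (2 - \<alpha>) * p\<^sup>2) * Y \<le> \<alpha> * (1 - q) * Y"
    using weights \<open>0 \<le> Y\<close> by (rule mult_right_mono)
  ultimately show ?thesis
    by (simp add: algebra_simps)
qed

(* Multiplying descent, split and drift by alpha, 1 - alpha and 2 - alpha and adding them eliminates
   Y and Z; the last condition then turns the budget for Delta into X <= T. *)

definition admissible_weight :: "real \<Rightarrow> real \<Rightarrow> real \<Rightarrow> real \<Rightarrow> bool" where
  "admissible_weight p q v \<alpha> \<longleftrightarrow> 0 \<le> \<alpha> \<and> \<alpha> \<le> 1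
     \<and> 2 * (1 - \<alpha>) + 2 * (2 - \<alpha>) * p\<^sup>2 \<le> \<alpha> * (1 - q)
     \<and> \<alpha> + (\<alpha> + 2 * (2 - \<alpha>) * p) * v * (2 * (p + q) + 4 * v) \<le> 2 * (p + q) + 4 * v"

lemma recursions_imply_bound_if_admissible:
  fixes X Y Z \<Delta> T p q v :: real
  assumes "admissible_weight p q v \<alpha>" "0 \<le> Y" "0 \<le> T" "1 \<le> 2 * (p + q) + 4 * v"
    and descent: "X + (1 - q) * Y \<le> 2 * \<Delta> + Z + v * T"
    and split: "X \<le> 2 * Y + 2 * Z"
    and drift: "Z \<le> 2 * p\<^sup>2 * Y + 2 * p * (v * T)"
    and budget: "2 * \<Delta> * (2 * (p + q) + 4 * v) \<le> T"
  shows "X \<le> T"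
proof -
  define W where "W = 2 * (p + q) + 4 * v"
  define c where "c = (\<alpha> + 2 * (2 - \<alpha>) * p) * v"
  have "0 \<le> \<alpha>" "\<alpha> \<le> 1" and weights: "2 * (1 - \<alpha>) + 2 * (2 - \<alpha>) * p\<^sup>2 \<le> \<alpha> * (1 - q)"
    and "\<alpha> + c * W \<le> W"
    using assms(1) by (simp_all add: admissible_weight_def c_def W_def)
  have "X \<le> 2 * \<alpha> * \<Delta> + c * T"
    using combine_recursions[OF \<open>0 \<le> \<alpha>\<close> \<open>\<alpha> \<le> 1\<close> \<open>0 \<le> Y\<close> descent split drift weights]
    by (simp add: c_def mult.assoc)
  then have "W * X \<le> W * (2 * \<alpha> * \<Delta> + c * T)"
    using assms(4) by (intro mult_left_mono) (auto simp: W_def)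
  also have "\<dots> = \<alpha> * (2 * \<Delta> * W) + c * W * T"
    by (simp add: algebra_simps)
  also have "\<dots> \<le> \<alpha> * T + c * W * T"
    using budget \<open>0 \<le> \<alpha>\<close> by (simp add: W_def mult_left_mono)
  also have "\<dots> = (\<alpha> + c * W) * T"
    by (simp add: algebra_simps)
  also have "\<dots> \<le> W * T"
    using \<open>\<alpha> + c * W \<le> W\<close> \<open>0 \<le> T\<close> by (rule mult_right_mono)
  finally show ?thesis
    using assms(4) by (simp add: W_def)
qed

lemma admissible_weight_seven_eighths:
  fixes p q v :: real
  assumes "0 \<le> p" "0 \<le> q" "0 \<le> v" "p + q \<le> 1/2" "v \<le> 1/4" "1/4 \<le> p + q"
    and saturated: "p + q = 1/2 \<or> v = 1/4"
  shows "admissible_weight p q v (7/8)"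
proof -
  define u where "u = p + q"
  have "p \<le> 1/2" "p \<le> u" "0 \<le> u" "u \<le> 1/2" "1/4 \<le> u"
    using assms by (auto simp: u_def)
  have "p * p \<le> p * (1/2)"
    using \<open>p \<le> 1/2\<close> \<open>0 \<le> p\<close> by (rule mult_left_mono)
  then have "2 * (1 - 7/8) + 2 * (2 - 7/8) * p\<^sup>2 \<le> 7/8 * (1 - q)"
    using \<open>p + q \<le> 1/2\<close> \<open>0 \<le> q\<close> by (simp add: power2_eq_square)
  moreover have "7/8 + (7/8 + 2 * (2 - 7/8) * p) * v * (2 * u + 4 * v) \<le> 2 * u + 4 * v"
    using saturated unfolding u_def[symmetric]
  proof
    assume "u = 1/2"
    have "(7/8 + 2 * (2 - 7/8) * p) * v * (2 * u + 4 * v) \<le> 2 * v * (2 * u + 4 * v)"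
      using \<open>p \<le> 1/2\<close> \<open>0 \<le> v\<close> \<open>0 \<le> u\<close> by (intro mult_right_mono) auto
    also have "\<dots> = 2 * v + 8 * (v * v)"
      using \<open>u = 1/2\<close> by (simp add: algebra_simps)
    also have "\<dots> \<le> 2 * v + 8 * (v * (1/4))"
      using mult_left_mono[OF \<open>v \<le> 1/4\<close> \<open>0 \<le> v\<close>] by simp
    finally show ?thesis
      by (simp add: \<open>u = 1/2\<close>)
  next
    assume "v = 1/4"
    have "(7/8 + 2 * (2 - 7/8) * p) * v * (2 * u + 4 * v) = (7/32 + 9/16 * p) * (2 * u + 1)"
      by (simp add: \<open>v = 1/4\<close> field_simps)
    also have "\<dots> \<le> (7/32 + 9/16 * u) * (2 * u + 1)"
      using \<open>p \<le> u\<close> \<open>0 \<le> u\<close> by (intro mult_right_mono) auto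
    also have "\<dots> = 7/32 + u + 9/8 * (u * u)"
      by (simp add: field_simps)
    also have "\<dots> \<le> 7/32 + u + 9/8 * (u * (1/2))"
      using mult_left_mono[OF \<open>u \<le> 1/2\<close> \<open>0 \<le> u\<close>] by simp
    finally show ?thesis
      using \<open>1/4 \<le> u\<close> unfolding \<open>v = 1/4\<close> by simp
  qed
  ultimately show ?thesis
    by (simp add: admissible_weight_def u_def)
qed

lemma admissible_weight_three_quarters:
  fixes p q :: real
  assumes "0 \<le> p" "0 \<le> q" "p + q < 1/4"
  shows "admissible_weight p q (1/4) (3/4)"
proof -
  define u where "u = p + q"
  have "p \<le> u" "0 \<le> u" "u < 1/4"
    using assms by (auto simp: u_def)
  have "p * p \<le> p * (1/4)"
    using assms by (intro mult_left_mono) auto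
  then have "2 * (1 - 3/4) + 2 * (2 - 3/4) * p\<^sup>2 \<le> 3/4 * (1 - q)"
    using assms by (simp add: power2_eq_square)
  moreover have "3/4 + (3/4 + 2 * (2 - 3/4) * p) * (1/4) * (2 * u + 4 * (1/4)) \<le> 2 * u + 4 * (1/4)"
  proof -
    have "(3/4 + 2 * (2 - 3/4) * p) * (1/4) * (2 * u + 1) \<le> (3/16 + 5/8 * u) * (2 * u + 1)"
      using \<open>p \<le> u\<close> \<open>0 \<le> u\<close> by (intro mult_right_mono) auto
    also have "\<dots> = 3/16 + u + 5/4 * (u * u)"
      by (simp add: field_simps)
    also have "\<dots> \<le> 3/16 + u + 5/4 * (u * (1/4))"
      using \<open>u < 1/4\<close> \<open>0 \<le> u\<close> mult_left_mono[of u "1/4" u] by simp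
    finally show ?thesis
      using \<open>0 \<le> u\<close> by simp
  qed
  ultimately show ?thesis
    unfolding admissible_weight_def u_def[symmetric] by simp
qed

lemma recursions_imply_bound:
  fixes X Y Z \<Delta> T p q v :: real
  assumes "0 \<le> Y" "0 \<le> T" "0 \<le> p" "0 \<le> q" "0 \<le> v"
    and "p + q \<le> 1/2" "v \<le> 1/4" and saturated: "p + q = 1/2 \<or> v = 1/4"
    and descent: "X + (1 - q) * Y \<le> 2 * \<Delta> + Z + v * T"
    and split: "X \<le> 2 * Y + 2 * Z"
    and drift: "Z \<le> 2 * p\<^sup>2 * Y + 2 * p * (v * T)"
    and budget: "2 * \<Delta> * (2 * (p + q) + 4 * v) \<le> T"
  shows "X \<le> T"
proof -
  have "1 \<le> 2 * (p + q) + 4 * v"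
    using saturated \<open>0 \<le> p\<close> \<open>0 \<le> q\<close> \<open>0 \<le> v\<close> by auto
  moreover have "admissible_weight p q v (if 1/4 \<le> p + q then 7/8 else 3/4)"
  proof (cases "1/4 \<le> p + q")
    case True
    then show ?thesis
      using admissible_weight_seven_eighths[of p q v] saturated assms(3-7) by simp
  next
    case False
    then have "v = 1/4"
      using saturated by auto
    then show ?thesis
      using False admissible_weight_three_quarters[of p q] assms(3,4) by (simp add: \<open>v = 1/4\<close>)
  qed
  ultimately show ?thesis
    using recursions_imply_bound_if_admissible assms(1,2) descent split drift budget by blast
qed

section \<open>The order of the gradients within a round\<close>

definition worker_offset :: "(nat \<Rightarrow> nat \<Rightarrow> nat) \<Rightarrow> nat \<Rightarrow> nat \<Rightarrow> nat" where
  "worker_offset M k i = (\<Sum>i'<i. M k i')"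

lemma worker_offset_Suc: "worker_offset M k (Suc i) = worker_offset M k i + M k i"
  by (simp add: worker_offset_def)

lemma worker_offset_mono: "i \<le> i' \<Longrightarrow> worker_offset M k i \<le> worker_offset M k i'"
  unfolding worker_offset_def by (rule sum_mono2) auto

lemma round_order_Suc:
  "round_order (Suc n) M k = round_order n M k @ map (\<lambda>j. (n, j)) [0..<M k n]"
  by (simp add: round_order_def)

lemma length_round_order: "length (round_order n M k) = worker_offset M k n"
  by (induction n) (simp_all add: round_order_Suc worker_offset_Suc, simp add: round_order_def worker_offset_def)

lemma nth_round_order:
  assumes "r < worker_offset M k n"
  obtains i j where "round_order n M k ! r = (i, j)" "i < n" "j < M k i" "worker_offset M k i + j = r"
  using assms
proof (induction n)
  case (Suc n)
  show ?case
  proof (cases "r < worker_offset M k n")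
    case True
    then show ?thesis
      using Suc.IH Suc.prems(1) by (auto simp: round_order_Suc nth_append length_round_order)
  next
    case False
    then show ?thesis
      using Suc.prems by (auto simp: round_order_Suc nth_append length_round_order worker_offset_Suc)
  qed
qed (simp add: worker_offset_def)

lemma nth_round_order_offset:
  assumes "i < n" "j < M k i"
  shows "round_order n M k ! (worker_offset M k i + j) = (i, j)"
  using assms
proof (induction n)
  case (Suc n)
  show ?case
  proof (cases "i < n")
    case True
    have "worker_offset M k i + j < worker_offset M k n"
      using worker_offset_mono[of "Suc i" n M k] True Suc.prems by (simp add: worker_offset_Suc)
    then show ?thesis
      using Suc True by (simp add: round_order_Suc nth_append length_round_order)
  next
    case False
    then have "i = n" using Suc.prems by simp
    then show ?thesis
      using Suc.prems by (simp add: round_order_Suc nth_append length_round_order)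
  qed
qed simp

lemma sum_round_order:
  "(\<Sum>r < worker_offset M k n. F (round_order n M k ! r)) = (\<Sum>i<n. \<Sum>j < M k i. F (i, j))"
proof -
  have "(\<Sum>r < worker_offset M k n. F (round_order n M k ! r)) = sum_list (map F (round_order n M k))"
    by (simp add: sum_list_sum_nth atLeast0LessThan length_round_order)
  also have "\<dots> = (\<Sum>i<n. \<Sum>j < M k i. F (i, j))"
    by (induction n)
      (simp_all add: round_order_Suc interv_sum_list_conv_sum_set_nat atLeast0LessThan o_def,
       simp add: round_order_def)
  finally show ?thesis .
qed

section \<open>One step with an unbiased stochastic gradient\<close>

locale smooth_stochastic_problem =
  D: prob_space D for D :: "'b measure" +
  fixes f :: "'a::euclidean_space \<Rightarrow> real" and df :: "'a \<Rightarrow> 'a"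
    and L fstar \<sigma> :: real and g :: "'a \<Rightarrow> 'b \<Rightarrow> 'a"
  assumes deriv: "\<And>x. (f has_derivative (\<lambda>h. df x \<bullet> h)) (at x)"
    and lipschitz: "\<And>x y. norm (df x - df y) \<le> L * norm (x - y)"
    and L_pos: "0 < L"
    and lower_bound: "\<And>x. fstar \<le> f x"
    and g_measurable: "case_prod g \<in> borel_measurable (borel \<Otimes>\<^sub>M D)"
    and g_integrable: "\<And>x. integrable D (g x)"
    and g_unbiased: "\<And>x. (\<integral>\<xi>. g x \<xi> \<partial>D) = df x"
    and g_variance: "\<And>x. (\<integral>\<^sup>+\<xi>. ennreal ((norm (g x \<xi> - df x))\<^sup>2) \<partial>D) \<le> ennreal (\<sigma>\<^sup>2)"
begin

lemma f_borel [measurable]: "f \<in> borel_measurable borel"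
  using deriv
  by (intro borel_measurable_continuous_onI continuous_at_imp_continuous_on)
    (auto intro: has_derivative_continuous)

lemma df_borel [measurable]: "df \<in> borel_measurable borel"
proof -
  have "L-lipschitz_on UNIV df"
    using lipschitz L_pos by (intro lipschitz_onI) (auto simp: dist_norm)
  then show ?thesis
    by (intro borel_measurable_continuous_onI lipschitz_on_continuous_on)
qed

lemma measurable_g_comp:
  assumes "x \<in> borel_measurable N" "\<xi> \<in> measurable N D"
  shows "(\<lambda>\<omega>. g (x \<omega>) (\<xi> \<omega>)) \<in> borel_measurable N"
  using measurable_compose[OF measurable_Pair[OF assms] g_measurable] by simp

lemma noise_sq_integrable: "integrable D (\<lambda>\<xi>. (norm (g z \<xi> - df z))\<^sup>2)"
proof (rule integrableI_bounded)
  show "(\<lambda>\<xi>. (norm (g z \<xi> - df z))\<^sup>2) \<in> borel_measurable D"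
    using measurable_g_comp[of "\<lambda>_. z" D "\<lambda>\<xi>. \<xi>"] by measurable
  show "(\<integral>\<^sup>+\<xi>. ennreal (norm ((norm (g z \<xi> - df z))\<^sup>2)) \<partial>D) < \<infinity>"
    using g_variance[of z] by (simp add: le_less_trans)
qed

lemma noise_sq_integral_le: "(\<integral>\<xi>. (norm (g z \<xi> - df z))\<^sup>2 \<partial>D) \<le> \<sigma>\<^sup>2"
  using g_variance[of z] nn_integral_eq_integral[OF noise_sq_integrable] by simp

lemma norm_sq_shifted_noise_integral:
  "integrable D (\<lambda>\<xi>. (norm (v + (g z \<xi> - df z)))\<^sup>2)"
  "(\<integral>\<xi>. (norm (v + (g z \<xi> - df z)))\<^sup>2 \<partial>D) = (norm v)\<^sup>2 + (\<integral>\<xi>. (norm (g z \<xi> - df z))\<^sup>2 \<partial>D)"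
proof -
  have expand: "(norm (v + (g z \<xi> - df z)))\<^sup>2
      = (norm v)\<^sup>2 - 2 * (v \<bullet> df z) + 2 * (v \<bullet> g z \<xi>) + (norm (g z \<xi> - df z))\<^sup>2" for \<xi>
    by (simp add: power2_norm_eq_inner algebra_simps inner_commute)
  show "integrable D (\<lambda>\<xi>. (norm (v + (g z \<xi> - df z)))\<^sup>2)"
    unfolding expand using g_integrable noise_sq_integrable by auto
  show "(\<integral>\<xi>. (norm (v + (g z \<xi> - df z)))\<^sup>2 \<partial>D) = (norm v)\<^sup>2 + (\<integral>\<xi>. (norm (g z \<xi> - df z))\<^sup>2 \<partial>D)"
    unfolding expand using g_integrable noise_sq_integrable
    by (simp add: g_unbiased D.prob_space)
qed

lemma nn_integral_norm_sq_shifted_noise_le: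
  "(\<integral>\<^sup>+\<xi>. ennreal ((norm (v + (g z \<xi> - df z)))\<^sup>2) \<partial>D) \<le> ennreal ((norm v)\<^sup>2 + \<sigma>\<^sup>2)"
  using nn_integral_eq_integral[OF norm_sq_shifted_noise_integral(1)] noise_sq_integral_le
  by (simp add: norm_sq_shifted_noise_integral(2))

lemma descent_majorant_integral:
  fixes x z :: 'a and \<gamma> :: real
  defines "Q \<equiv> \<lambda>\<xi>. f x - fstar - \<gamma> * (df x \<bullet> g z \<xi>) + L / 2 * \<gamma>\<^sup>2 * (norm (g z \<xi>))\<^sup>2"
  shows "integrable D Q"
    and "(\<integral>\<xi>. Q \<xi> \<partial>D) \<le> f x - fstar - \<gamma> * (df x \<bullet> df z) + L / 2 * \<gamma>\<^sup>2 * ((norm (df z))\<^sup>2 + \<sigma>\<^sup>2)"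
proof -
  have g_sq: "integrable D (\<lambda>\<xi>. (norm (g z \<xi>))\<^sup>2)"
    "(\<integral>\<xi>. (norm (g z \<xi>))\<^sup>2 \<partial>D) \<le> (norm (df z))\<^sup>2 + \<sigma>\<^sup>2"
    using norm_sq_shifted_noise_integral[of "df z" z] noise_sq_integral_le[of z] by simp_all
  show "integrable D Q"
    unfolding Q_def using g_integrable g_sq(1) by auto
  have "(\<integral>\<xi>. Q \<xi> \<partial>D)
      = f x - fstar - \<gamma> * (df x \<bullet> df z) + L / 2 * \<gamma>\<^sup>2 * (\<integral>\<xi>. (norm (g z \<xi>))\<^sup>2 \<partial>D)"
    unfolding Q_def using g_integrable g_sq(1) by (simp add: g_unbiased D.prob_space)
  then show "(\<integral>\<xi>. Q \<xi> \<partial>D) \<le> f x - fstar - \<gamma> * (df x \<bullet> df z) + L / 2 * \<gamma>\<^sup>2 * ((norm (df z))\<^sup>2 + \<sigma>\<^sup>2)"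
    using g_sq(2) L_pos by (simp add: mult_left_mono)
qed

lemma nn_integral_descent_step:
  assumes "0 \<le> \<gamma>" "L * \<gamma> \<le> 1"
  shows "(\<integral>\<^sup>+\<xi>. ennreal (f (x - \<gamma> *\<^sub>R g z \<xi>) - fstar) \<partial>D)
           + ennreal (\<gamma> / 2 * (norm (df x))\<^sup>2) + ennreal (\<gamma> / 2 * (1 - L * \<gamma>) * (norm (df z))\<^sup>2)
         \<le> ennreal (f x - fstar) + ennreal (\<gamma> / 2 * (norm (df x - df z))\<^sup>2)
           + ennreal (L * \<gamma>\<^sup>2 * \<sigma>\<^sup>2 / 2)"
proof -
  define Q where "Q \<xi> = f x - fstar - \<gamma> * (df x \<bullet> g z \<xi>) + L / 2 * \<gamma>\<^sup>2 * (norm (g z \<xi>))\<^sup>2" for \<xi>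
  have f_le_Q: "f (x - \<gamma> *\<^sub>R g z \<xi>) - fstar \<le> Q \<xi>" for \<xi>
    using descent_lemma[OF deriv lipschitz, of "x - \<gamma> *\<^sub>R g z \<xi>" x]
    by (simp add: Q_def power_mult_distrib)
  have Q_nonneg: "0 \<le> Q \<xi>" for \<xi>
    using f_le_Q[of \<xi>] lower_bound[of "x - \<gamma> *\<^sub>R g z \<xi>"] by linarith
  have "\<gamma> * (df x \<bullet> df z)
      = \<gamma> / 2 * (norm (df x))\<^sup>2 + \<gamma> / 2 * (norm (df z))\<^sup>2 - \<gamma> / 2 * (norm (df x - df z))\<^sup>2"
    by (simp add: power2_norm_eq_inner algebra_simps inner_commute)
  with descent_majorant_integral(2)[where x = x and z = z and \<gamma> = \<gamma>, folded Q_def]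
  have real_bound: "(\<integral>\<xi>. Q \<xi> \<partial>D) + \<gamma> / 2 * (norm (df x))\<^sup>2 + \<gamma> / 2 * (1 - L * \<gamma>) * (norm (df z))\<^sup>2
      \<le> (f x - fstar) + \<gamma> / 2 * (norm (df x - df z))\<^sup>2 + L * \<gamma>\<^sup>2 * \<sigma>\<^sup>2 / 2"
    by (simp add: field_simps power2_eq_square)
  have nonneg: "0 \<le> (\<integral>\<xi>. Q \<xi> \<partial>D)" "0 \<le> \<gamma> / 2 * (norm (df x))\<^sup>2"
    "0 \<le> \<gamma> / 2 * (1 - L * \<gamma>) * (norm (df z))\<^sup>2"
    using Q_nonneg assms by simp_all
  have "(\<integral>\<^sup>+\<xi>. ennreal (f (x - \<gamma> *\<^sub>R g z \<xi>) - fstar) \<partial>D) \<le> (\<integral>\<^sup>+\<xi>. ennreal (Q \<xi>) \<partial>D)"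
    by (intro nn_integral_mono ennreal_leI f_le_Q)
  also have "\<dots> = ennreal (\<integral>\<xi>. Q \<xi> \<partial>D)"
    using descent_majorant_integral(1)[where x = x and z = z and \<gamma> = \<gamma>, folded Q_def] Q_nonneg
    by (intro nn_integral_eq_integral) auto
  finally have "(\<integral>\<^sup>+\<xi>. ennreal (f (x - \<gamma> *\<^sub>R g z \<xi>) - fstar) \<partial>D)
      + ennreal (\<gamma> / 2 * (norm (df x))\<^sup>2) + ennreal (\<gamma> / 2 * (1 - L * \<gamma>) * (norm (df z))\<^sup>2)
    \<le> ennreal ((\<integral>\<xi>. Q \<xi> \<partial>D) + \<gamma> / 2 * (norm (df x))\<^sup>2 + \<gamma> / 2 * (1 - L * \<gamma>) * (norm (df z))\<^sup>2)"
    using nonneg by (simp add: add_right_mono)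
  also have "\<dots> \<le> ennreal ((f x - fstar) + \<gamma> / 2 * (norm (df x - df z))\<^sup>2 + L * \<gamma>\<^sup>2 * \<sigma>\<^sup>2 / 2)"
    using real_bound by (rule ennreal_leI)
  also have "\<dots> = ennreal (f x - fstar) + ennreal (\<gamma> / 2 * (norm (df x - df z))\<^sup>2)
      + ennreal (L * \<gamma>\<^sup>2 * \<sigma>\<^sup>2 / 2)"
    using lower_bound[of x] L_pos \<open>0 \<le> \<gamma>\<close> by simp
  finally show ?thesis .
qed

end

section \<open>The main branch of Local SGD\<close>

locale local_sgd = smooth_stochastic_problem D f df L fstar \<sigma> g
  for D :: "'b measure" and f :: "'a::euclidean_space \<Rightarrow> real" and df L fstar \<sigma> g +
  fixes n B :: nat and M :: "nat \<Rightarrow> nat \<Rightarrow> nat" and w0 :: 'a and \<gamma> :: real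
  assumes B_pos: "0 < B"
    and round_size: "\<And>k. (\<Sum>i<n. M k i) = B"
    and \<gamma>_pos: "0 < \<gamma>"
    and \<gamma>_le: "2 * real B * L * \<gamma> \<le> 1"
begin

abbreviation \<Omega> :: "(nat \<times> nat \<times> nat \<Rightarrow> 'b) measure" where
  "\<Omega> \<equiv> PiM UNIV (\<lambda>_. D)"

(* Step t of the main branch lies in round t div B and applies the gradient that worker
   step_worker t computed in its local step step_local t, i.e. g(z_i^{k,j}; eta_i^{k,j}) with
   (k, i, j) = sample_index t; eval_point t is z_i^{k,j} and iterate t is x^t. *)

definition server :: "nat \<Rightarrow> (nat \<times> nat \<times> nat \<Rightarrow> 'b) \<Rightarrow> 'a" where
  "server k \<omega> = server_iter g \<gamma> n M w0 \<omega> k"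

definition worker_iter :: "nat \<Rightarrow> nat \<Rightarrow> (nat \<times> nat \<times> nat \<Rightarrow> 'b) \<Rightarrow> nat \<Rightarrow> 'a" where
  "worker_iter k i \<omega> j = local_iter g \<gamma> (server k \<omega>) (\<lambda>l. \<omega> (k, i, l)) j"

definition step_worker :: "nat \<Rightarrow> nat" where
  "step_worker t = fst (round_order n M (t div B) ! (t mod B))"

definition step_local :: "nat \<Rightarrow> nat" where
  "step_local t = snd (round_order n M (t div B) ! (t mod B))"

definition step_offset :: "nat \<Rightarrow> nat" where
  "step_offset t = worker_offset M (t div B) (step_worker t)"

definition sample_index :: "nat \<Rightarrow> nat \<times> nat \<times> nat" where
  "sample_index t = (t div B, step_worker t, step_local t)"

definition eval_point :: "nat \<Rightarrow> (nat \<times> nat \<times> nat \<Rightarrow> 'b) \<Rightarrow> 'a" where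
  "eval_point t \<omega> = worker_iter (t div B) (step_worker t) \<omega> (step_local t)"

definition stoch_grad :: "nat \<Rightarrow> (nat \<times> nat \<times> nat \<Rightarrow> 'b) \<Rightarrow> 'a" where
  "stoch_grad t \<omega> = g (eval_point t \<omega>) (\<omega> (sample_index t))"

definition iterate :: "nat \<Rightarrow> (nat \<times> nat \<times> nat \<Rightarrow> 'b) \<Rightarrow> 'a" where
  "iterate t \<omega> = main_branch g \<gamma> n M B w0 \<omega> t"

lemma worker_offset_round: "worker_offset M k n = B"
  using round_size by (simp add: worker_offset_def)

lemma step_decomposition:
  "step_worker t < n" "step_local t < M (t div B) (step_worker t)"
  "t div B * B + step_offset t + step_local t = t"
proof -
  have "t mod B < worker_offset M (t div B) n"
    using B_pos by (simp add: worker_offset_round)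
  then obtain i j where "round_order n M (t div B) ! (t mod B) = (i, j)" "i < n"
    "j < M (t div B) i" "worker_offset M (t div B) i + j = t mod B"
    by (rule nth_round_order)
  then show "step_worker t < n" "step_local t < M (t div B) (step_worker t)"
    "t div B * B + step_offset t + step_local t = t"
    by (simp_all add: step_worker_def step_local_def step_offset_def add.assoc)
qed

lemma step_at_offset:
  assumes "i < n" "j < M k i"
  defines "t \<equiv> k * B + worker_offset M k i + j"
  shows "t div B = k" "step_worker t = i" "step_local t = j" "step_offset t = worker_offset M k i"
proof -
  have "worker_offset M k i + j < B"
    using worker_offset_mono[of "Suc i" n M k] assms(1,2)
    by (simp add: worker_offset_Suc worker_offset_round)
  then have "t div B = k" "t mod B = worker_offset M k i + j"
    by (simp_all add: t_def add.assoc)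
  moreover have "round_order n M k ! (worker_offset M k i + j) = (i, j)"
    using assms(1,2) by (rule nth_round_order_offset)
  ultimately show "t div B = k" "step_worker t = i" "step_local t = j"
    "step_offset t = worker_offset M k i"
    by (simp_all add: step_worker_def step_local_def step_offset_def)
qed

lemma stoch_grad_at_offset:
  assumes "i < n" "j < M k i"
  shows "stoch_grad (k * B + worker_offset M k i + j) \<omega> = g (worker_iter k i \<omega> j) (\<omega> (k, i, j))"
  using step_at_offset[OF assms]
  by (simp add: stoch_grad_def eval_point_def sample_index_def)

lemma sample_index_inj: "inj sample_index"
proof (rule injI)
  fix s t assume "sample_index s = sample_index t"
  then have "s div B = t div B" "step_worker s = step_worker t" "step_local s = step_local t"
    by (simp_all add: sample_index_def)
  then show "s = t"
    using step_decomposition(3)[of s] step_decomposition(3)[of t] by (simp add: step_offset_def)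
qed

lemma worker_iter_0: "worker_iter k i \<omega> 0 = server k \<omega>"
  by (simp add: worker_iter_def)

lemma worker_iter_Suc:
  "worker_iter k i \<omega> (Suc j) = worker_iter k i \<omega> j - \<gamma> *\<^sub>R g (worker_iter k i \<omega> j) (\<omega> (k, i, j))"
  by (simp add: worker_iter_def)

lemma worker_iter_eq_sum:
  "worker_iter k i \<omega> j = server k \<omega> - \<gamma> *\<^sub>R (\<Sum>l<j. g (worker_iter k i \<omega> l) (\<omega> (k, i, l)))"
  by (induction j) (simp_all add: worker_iter_0 worker_iter_Suc scaleR_add_right)

lemma server_Suc: "server (Suc k) \<omega> = server k \<omega> - \<gamma> *\<^sub>R (\<Sum>r<B. stoch_grad (k * B + r) \<omega>)"
proof -
  have "(\<Sum>r<B. stoch_grad (k * B + r) \<omega>)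
      = (\<Sum>r < worker_offset M k n. (\<lambda>(i, j). stoch_grad (k * B + worker_offset M k i + j) \<omega>)
                                     (round_order n M k ! r))"
  proof (rule sum.cong)
    fix r assume "r \<in> {..<worker_offset M k n}"
    then obtain i j where "round_order n M k ! r = (i, j)" "worker_offset M k i + j = r"
      using nth_round_order by (metis lessThan_iff)
    then show "stoch_grad (k * B + r) \<omega>
        = (\<lambda>(i, j). stoch_grad (k * B + worker_offset M k i + j) \<omega>) (round_order n M k ! r)"
      by (simp add: add.assoc)
  qed (simp add: worker_offset_round)
  also have "\<dots> = (\<Sum>i<n. \<Sum>j<M k i. g (worker_iter k i \<omega> j) (\<omega> (k, i, j)))"
    by (simp add: sum_round_order stoch_grad_at_offset)
  finally show ?thesis
    by (simp add: server_def worker_iter_def)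
qed

lemma round_partial_eq_sum:
  "r \<le> B \<Longrightarrow> round_partial g \<gamma> n M w0 \<omega> k r = server k \<omega> - \<gamma> *\<^sub>R (\<Sum>r'<r. stoch_grad (k * B + r') \<omega>)"
proof (induction r)
  case (Suc r)
  then have "round_grad g \<gamma> n M w0 \<omega> k r = stoch_grad (k * B + r) \<omega>"
    by (simp add: round_grad_def stoch_grad_def eval_point_def sample_index_def step_worker_def
        step_local_def worker_iter_def server_def Let_def)
  with Suc show ?case
    by (simp add: scaleR_add_right)
qed (simp add: server_def)

lemma iterate_eq_sum:
  "iterate t \<omega> = server (t div B) \<omega> - \<gamma> *\<^sub>R (\<Sum>r < t mod B. stoch_grad (t div B * B + r) \<omega>)"
  using round_partial_eq_sum[of "t mod B"] B_pos by (simp add: iterate_def main_branch_def)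

lemma iterate_Suc: "iterate (Suc t) \<omega> = iterate t \<omega> - \<gamma> *\<^sub>R stoch_grad t \<omega>"
proof -
  have "iterate (Suc t) \<omega>
      = server (t div B) \<omega> - \<gamma> *\<^sub>R (\<Sum>r < Suc (t mod B). stoch_grad (t div B * B + r) \<omega>)"
  proof (cases "Suc (t mod B) < B")
    case True
    then have "Suc t div B = t div B" "Suc t mod B = Suc (t mod B)"
      by (simp_all add: div_Suc mod_Suc)
    then show ?thesis
      by (simp add: iterate_eq_sum)
  next
    case False
    then have "Suc (t mod B) = B"
      using B_pos mod_less_divisor[of B t] by linarith
    moreover from this have "Suc t div B = Suc (t div B)" "Suc t mod B = 0"
      by (simp_all add: div_Suc mod_Suc)
    ultimately show ?thesis
      by (simp add: iterate_eq_sum server_Suc)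
  qed
  also have "(\<Sum>r < Suc (t mod B). stoch_grad (t div B * B + r) \<omega>)
      = (\<Sum>r < t mod B. stoch_grad (t div B * B + r) \<omega>) + stoch_grad t \<omega>"
    by (simp add: div_mult_mod_eq)
  finally show ?thesis
    by (simp add: iterate_eq_sum[of t] scaleR_add_right)
qed

lemma iterate_minus_eval_point:
  "iterate t \<omega> - eval_point t \<omega> = - \<gamma> *\<^sub>R (\<Sum>r < step_offset t. stoch_grad (t div B * B + r) \<omega>)"
proof -
  let ?k = "t div B" and ?i = "step_worker t" and ?j = "step_local t"
  have "eval_point t \<omega> = server ?k \<omega> - \<gamma> *\<^sub>R (\<Sum>l < ?j. g (worker_iter ?k ?i \<omega> l) (\<omega> (?k, ?i, l)))"
    unfolding eval_point_def by (rule worker_iter_eq_sum)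
  also have "(\<Sum>l < ?j. g (worker_iter ?k ?i \<omega> l) (\<omega> (?k, ?i, l)))
      = (\<Sum>l < ?j. stoch_grad (?k * B + step_offset t + l) \<omega>)"
    using step_decomposition(1,2)[of t]
    by (intro sum.cong refl) (simp add: stoch_grad_at_offset step_offset_def)
  finally have eval: "eval_point t \<omega>
      = server ?k \<omega> - \<gamma> *\<^sub>R (\<Sum>l < ?j. stoch_grad (?k * B + step_offset t + l) \<omega>)" .
  have "t mod B = step_offset t + ?j"
    using step_decomposition(3)[of t] div_mult_mod_eq[of t B] by linarith
  then have "(\<Sum>r < t mod B. stoch_grad (?k * B + r) \<omega>)
      = (\<Sum>r < step_offset t. stoch_grad (?k * B + r) \<omega>)
        + (\<Sum>l < ?j. stoch_grad (?k * B + step_offset t + l) \<omega>)"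
    by (simp only: sum_lessThan_add add.assoc)
  then show ?thesis
    by (simp add: iterate_eq_sum[of t] eval scaleR_add_right)
qed

definition agree_before :: "nat \<Rightarrow> (nat \<times> nat \<times> nat \<Rightarrow> 'b) \<Rightarrow> (nat \<times> nat \<times> nat \<Rightarrow> 'b) \<Rightarrow> bool" where
  "agree_before T \<omega> \<omega>' \<longleftrightarrow> (\<forall>s<T. \<omega> (sample_index s) = \<omega>' (sample_index s))"

lemma agree_before_fun_upd: "agree_before t \<omega> (fun_upd \<omega> (sample_index t) c)"
  using sample_index_inj by (auto simp: agree_before_def inj_eq)

lemma worker_iter_cong:
  assumes "server k \<omega> = server k \<omega>'" "agree_before T \<omega> \<omega>'" "i < n"
  shows "j \<le> M k i \<Longrightarrow> k * B + worker_offset M k i + j \<le> T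
    \<Longrightarrow> worker_iter k i \<omega> j = worker_iter k i \<omega>' j"
proof (induction j)
  case (Suc j)
  have "k * B + worker_offset M k i + j < T"
    using Suc.prems by simp
  then have "\<omega> (sample_index (k * B + worker_offset M k i + j))
      = \<omega>' (sample_index (k * B + worker_offset M k i + j))"
    using assms(2) by (simp add: agree_before_def)
  then have "\<omega> (k, i, j) = \<omega>' (k, i, j)"
    using step_at_offset[OF assms(3), of j k] Suc.prems by (simp add: sample_index_def)
  with Suc show ?case
    by (simp add: worker_iter_Suc)
qed (simp add: worker_iter_0 assms(1))

lemma eval_point_stoch_grad_cong_server:
  assumes "server (t div B) \<omega> = server (t div B) \<omega>'" "agree_before T \<omega> \<omega>'"
  shows "t \<le> T \<Longrightarrow> eval_point t \<omega> = eval_point t \<omega>'"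
    and "t < T \<Longrightarrow> stoch_grad t \<omega> = stoch_grad t \<omega>'"
proof -
  show eval: "eval_point t \<omega> = eval_point t \<omega>'" if "t \<le> T"
    using worker_iter_cong[OF assms step_decomposition(1)] step_decomposition(2,3)[of t] that
    by (simp add: eval_point_def step_offset_def)
  show "t < T \<Longrightarrow> stoch_grad t \<omega> = stoch_grad t \<omega>'"
    using eval assms(2) by (simp add: stoch_grad_def agree_before_def)
qed

lemma server_cong: "k * B \<le> T \<Longrightarrow> agree_before T \<omega> \<omega>' \<Longrightarrow> server k \<omega> = server k \<omega>'"
proof (induction k)
  case (Suc k)
  have "stoch_grad (k * B + r) \<omega> = stoch_grad (k * B + r) \<omega>'" if "r < B" for r
    using eval_point_stoch_grad_cong_server(2)[of "k * B + r"] Suc that by simp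
  with Suc show ?case
    by (simp add: server_Suc)
qed (simp add: server_def)

lemma server_cong_at: "t \<le> T \<Longrightarrow> agree_before T \<omega> \<omega>' \<Longrightarrow> server (t div B) \<omega> = server (t div B) \<omega>'"
  by (rule server_cong) (auto intro: order_trans[OF div_times_less_eq_dividend])

lemma eval_point_cong: "t \<le> T \<Longrightarrow> agree_before T \<omega> \<omega>' \<Longrightarrow> eval_point t \<omega> = eval_point t \<omega>'"
  using eval_point_stoch_grad_cong_server(1)[OF server_cong_at] by blast

lemma stoch_grad_cong: "t < T \<Longrightarrow> agree_before T \<omega> \<omega>' \<Longrightarrow> stoch_grad t \<omega> = stoch_grad t \<omega>'"
  using eval_point_stoch_grad_cong_server(2)[OF server_cong_at] by (meson less_imp_le)

lemma iterate_cong: "t \<le> T \<Longrightarrow> agree_before T \<omega> \<omega>' \<Longrightarrow> iterate t \<omega> = iterate t \<omega>'"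
proof -
  assume "t \<le> T" "agree_before T \<omega> \<omega>'"
  moreover have "t div B * B + r < T" if "r < t mod B" for r
    using that \<open>t \<le> T\<close> div_mult_mod_eq[of t B] by linarith
  ultimately have "(\<Sum>r < t mod B. stoch_grad (t div B * B + r) \<omega>)
      = (\<Sum>r < t mod B. stoch_grad (t div B * B + r) \<omega>')"
    by (intro sum.cong refl stoch_grad_cong) auto
  with \<open>t \<le> T\<close> \<open>agree_before T \<omega> \<omega>'\<close> show ?thesis
    by (simp add: iterate_eq_sum server_cong_at)
qed

lemma worker_iter_measurable:
  "(\<lambda>\<omega>. server k \<omega>) \<in> borel_measurable \<Omega> \<Longrightarrow> (\<lambda>\<omega>. worker_iter k i \<omega> j) \<in> borel_measurable \<Omega>"
proof (induction j)
  case (Suc j)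
  then have "(\<lambda>\<omega>. g (worker_iter k i \<omega> j) (\<omega> (k, i, j))) \<in> borel_measurable \<Omega>"
    by (intro measurable_g_comp) simp_all
  with Suc show ?case
    by (simp add: worker_iter_Suc)
qed (simp add: worker_iter_0)

lemma eval_point_stoch_grad_measurable_server:
  assumes "(\<lambda>\<omega>. server (t div B) \<omega>) \<in> borel_measurable \<Omega>"
  shows "(\<lambda>\<omega>. eval_point t \<omega>) \<in> borel_measurable \<Omega>" "(\<lambda>\<omega>. stoch_grad t \<omega>) \<in> borel_measurable \<Omega>"
proof -
  show eval: "(\<lambda>\<omega>. eval_point t \<omega>) \<in> borel_measurable \<Omega>"
    unfolding eval_point_def using assms by (rule worker_iter_measurable)
  show "(\<lambda>\<omega>. stoch_grad t \<omega>) \<in> borel_measurable \<Omega>"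
    unfolding stoch_grad_def using eval by (rule measurable_g_comp) simp
qed

lemma server_measurable [measurable]: "(\<lambda>\<omega>. server k \<omega>) \<in> borel_measurable \<Omega>"
proof (induction k)
  case (Suc k)
  have "(\<lambda>\<omega>. stoch_grad (k * B + r) \<omega>) \<in> borel_measurable \<Omega>" if "r < B" for r
    using eval_point_stoch_grad_measurable_server(2)[of "k * B + r"] Suc that by simp
  with Suc show ?case
    by (simp add: server_Suc)
qed (simp add: server_def)

lemma eval_point_measurable [measurable]: "(\<lambda>\<omega>. eval_point t \<omega>) \<in> borel_measurable \<Omega>"
  and stoch_grad_measurable [measurable]: "(\<lambda>\<omega>. stoch_grad t \<omega>) \<in> borel_measurable \<Omega>"
  using eval_point_stoch_grad_measurable_server by simp_all

lemma iterate_measurable [measurable]: "(\<lambda>\<omega>. iterate t \<omega>) \<in> borel_measurable \<Omega>"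
  unfolding iterate_eq_sum by measurable

section \<open>Expected descent along the main branch\<close>

lemma L_\<gamma>_le: "L * \<gamma> \<le> 1/2"
proof -
  have "L * \<gamma> \<le> real B * (L * \<gamma>)"
    using B_pos L_pos \<gamma>_pos by simp
  then show ?thesis
    using \<gamma>_le by (simp add: mult.assoc)
qed

definition gap :: "nat \<Rightarrow> ennreal" where
  "gap t = (\<integral>\<^sup>+\<omega>. ennreal (f (iterate t \<omega>) - fstar) \<partial>\<Omega>)"

definition grad_sq :: "nat \<Rightarrow> ennreal" where
  "grad_sq t = (\<integral>\<^sup>+\<omega>. ennreal ((norm (df (iterate t \<omega>)))\<^sup>2) \<partial>\<Omega>)"

definition eval_grad_sq :: "nat \<Rightarrow> ennreal" where
  "eval_grad_sq t = (\<integral>\<^sup>+\<omega>. ennreal ((norm (df (eval_point t \<omega>)))\<^sup>2) \<partial>\<Omega>)"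

definition drift_sq :: "nat \<Rightarrow> ennreal" where
  "drift_sq t = (\<integral>\<^sup>+\<omega>. ennreal ((norm (df (iterate t \<omega>) - df (eval_point t \<omega>)))\<^sup>2) \<partial>\<Omega>)"

lemma \<Omega>_prob_space: "prob_space \<Omega>"
  by (intro prob_space_PiM D.prob_space_axioms)

lemma gap_0: "gap 0 = ennreal (f w0 - fstar)"
proof -
  interpret \<Omega>: prob_space \<Omega> by (rule \<Omega>_prob_space)
  show ?thesis
    by (simp add: gap_def iterate_eq_sum server_def \<Omega>.emeasure_space_1)
qed

(* The sample of step t is independent of everything determined by the earlier samples. *)

lemma nn_integral_fresh_sample:
  assumes "(\<lambda>(\<xi>, \<omega>). h \<omega> \<xi>) \<in> borel_measurable (D \<Otimes>\<^sub>M \<Omega>)"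
    and "\<And>\<omega> \<omega>'. agree_before t \<omega> \<omega>' \<Longrightarrow> h \<omega> = h \<omega>'"
  shows "(\<integral>\<^sup>+\<omega>. h \<omega> (\<omega> (sample_index t)) \<partial>\<Omega>) = (\<integral>\<^sup>+\<omega>. (\<integral>\<^sup>+\<xi>. h \<omega> \<xi> \<partial>D) \<partial>\<Omega>)"
  using D.prob_space_axioms assms(1)
  by (rule nn_integral_PiM_fresh_coordinate) (metis assms(2) agree_before_fun_upd)

lemma gap_Suc_le:
  "gap (Suc t) + ennreal (\<gamma> / 2) * grad_sq t + ennreal (\<gamma> / 2 * (1 - L * \<gamma>)) * eval_grad_sq t
   \<le> gap t + ennreal (\<gamma> / 2) * drift_sq t + ennreal (L * \<gamma>\<^sup>2 * \<sigma>\<^sup>2 / 2)"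
proof -
  interpret \<Omega>: prob_space \<Omega> by (rule \<Omega>_prob_space)
  define h where "h \<omega> \<xi> = ennreal (f (iterate t \<omega> - \<gamma> *\<^sub>R g (eval_point t \<omega>) \<xi>) - fstar)" for \<omega> \<xi>
  have "(\<lambda>p. g (eval_point t (snd p)) (fst p)) \<in> borel_measurable (D \<Otimes>\<^sub>M \<Omega>)"
    by (rule measurable_g_comp) measurable
  then have h_measurable: "(\<lambda>(\<xi>, \<omega>). h \<omega> \<xi>) \<in> borel_measurable (D \<Otimes>\<^sub>M \<Omega>)"
    unfolding h_def split_beta' by measurable
  have "(\<lambda>p. g (eval_point t (fst p)) (snd p)) \<in> borel_measurable (\<Omega> \<Otimes>\<^sub>M D)"
    by (rule measurable_g_comp) measurable
  then have [measurable]: "(\<lambda>\<omega>. \<integral>\<^sup>+\<xi>. h \<omega> \<xi> \<partial>D) \<in> borel_measurable \<Omega>"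
    unfolding h_def by measurable
  have h_cong: "h \<omega> = h \<omega>'" if "agree_before t \<omega> \<omega>'" for \<omega> \<omega>'
    using iterate_cong[OF le_refl that] eval_point_cong[OF le_refl that] by (simp add: h_def fun_eq_iff)
  have "gap (Suc t) = (\<integral>\<^sup>+\<omega>. h \<omega> (\<omega> (sample_index t)) \<partial>\<Omega>)"
    by (simp add: gap_def iterate_Suc stoch_grad_def h_def)
  also have "\<dots> = (\<integral>\<^sup>+\<omega>. (\<integral>\<^sup>+\<xi>. h \<omega> \<xi> \<partial>D) \<partial>\<Omega>)"
    using h_measurable h_cong by (rule nn_integral_fresh_sample)
  finally have "gap (Suc t) + ennreal (\<gamma> / 2) * grad_sq t + ennreal (\<gamma> / 2 * (1 - L * \<gamma>)) * eval_grad_sq t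
      = (\<integral>\<^sup>+\<omega>. (\<integral>\<^sup>+\<xi>. h \<omega> \<xi> \<partial>D) + ennreal (\<gamma> / 2 * (norm (df (iterate t \<omega>)))\<^sup>2)
          + ennreal (\<gamma> / 2 * (1 - L * \<gamma>) * (norm (df (eval_point t \<omega>)))\<^sup>2) \<partial>\<Omega>)"
    using \<gamma>_pos L_\<gamma>_le
    by (simp add: grad_sq_def eval_grad_sq_def nn_integral_add nn_integral_cmult[symmetric]
        ennreal_mult'[symmetric] mult.assoc)
  also have "\<dots> \<le> (\<integral>\<^sup>+\<omega>. ennreal (f (iterate t \<omega>) - fstar)
      + ennreal (\<gamma> / 2 * (norm (df (iterate t \<omega>) - df (eval_point t \<omega>)))\<^sup>2)
      + ennreal (L * \<gamma>\<^sup>2 * \<sigma>\<^sup>2 / 2) \<partial>\<Omega>)"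
    unfolding h_def using \<gamma>_pos L_\<gamma>_le
    by (intro nn_integral_mono nn_integral_descent_step) simp_all
  also have "\<dots> = gap t + ennreal (\<gamma> / 2) * drift_sq t + ennreal (L * \<gamma>\<^sup>2 * \<sigma>\<^sup>2 / 2)"
    using \<gamma>_pos
    by (simp add: gap_def drift_sq_def nn_integral_add nn_integral_cmult[symmetric]
        ennreal_mult'[symmetric] mult.assoc \<Omega>.emeasure_space_1)
  finally show ?thesis .
qed

definition noise :: "nat \<Rightarrow> (nat \<times> nat \<times> nat \<Rightarrow> 'b) \<Rightarrow> 'a" where
  "noise s \<omega> = stoch_grad s \<omega> - df (eval_point s \<omega>)"

lemma noise_sum_sq_le:
  "(\<integral>\<^sup>+\<omega>. ennreal ((norm (\<Sum>r<m. noise (s + r) \<omega>))\<^sup>2) \<partial>\<Omega>) \<le> ennreal (real m * \<sigma>\<^sup>2)"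
proof (induction m)
  case (Suc m)
  interpret \<Omega>: prob_space \<Omega> by (rule \<Omega>_prob_space)
  define V where "V \<omega> = (\<Sum>r<m. noise (s + r) \<omega>)" for \<omega>
  define h where "h \<omega> \<xi> = ennreal ((norm (V \<omega> + (g (eval_point (s + m) \<omega>) \<xi> - df (eval_point (s + m) \<omega>))))\<^sup>2)"
    for \<omega> \<xi>
  have V_measurable [measurable]: "V \<in> borel_measurable \<Omega>"
    unfolding V_def noise_def by measurable
  have "(\<lambda>p. g (eval_point (s + m) (snd p)) (fst p)) \<in> borel_measurable (D \<Otimes>\<^sub>M \<Omega>)"
    by (rule measurable_g_comp) measurable
  then have h_measurable: "(\<lambda>(\<xi>, \<omega>). h \<omega> \<xi>) \<in> borel_measurable (D \<Otimes>\<^sub>M \<Omega>)"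
    unfolding h_def split_beta' by measurable
  have h_cong: "h \<omega> = h \<omega>'" if "agree_before (s + m) \<omega> \<omega>'" for \<omega> \<omega>'
  proof -
    have "noise (s + r) \<omega> = noise (s + r) \<omega>'" if "r < m" for r
      using stoch_grad_cong[of "s + r" "s + m" \<omega> \<omega>'] eval_point_cong[of "s + r" "s + m" \<omega> \<omega>']
        \<open>agree_before (s + m) \<omega> \<omega>'\<close> that
      by (simp add: noise_def)
    then have "V \<omega> = V \<omega>'"
      unfolding V_def by simp
    then show ?thesis
      using eval_point_cong[OF le_refl that] by (simp add: h_def fun_eq_iff)
  qed
  have "(\<integral>\<^sup>+\<omega>. ennreal ((norm (\<Sum>r<Suc m. noise (s + r) \<omega>))\<^sup>2) \<partial>\<Omega>)
      = (\<integral>\<^sup>+\<omega>. h \<omega> (\<omega> (sample_index (s + m))) \<partial>\<Omega>)"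
    by (simp add: h_def V_def noise_def stoch_grad_def)
  also have "\<dots> = (\<integral>\<^sup>+\<omega>. (\<integral>\<^sup>+\<xi>. h \<omega> \<xi> \<partial>D) \<partial>\<Omega>)"
    using h_measurable h_cong by (rule nn_integral_fresh_sample)
  also have "\<dots> \<le> (\<integral>\<^sup>+\<omega>. ennreal ((norm (V \<omega>))\<^sup>2) + ennreal (\<sigma>\<^sup>2) \<partial>\<Omega>)"
    unfolding h_def
    by (intro nn_integral_mono order_trans[OF nn_integral_norm_sq_shifted_noise_le]) simp
  also have "\<dots> = (\<integral>\<^sup>+\<omega>. ennreal ((norm (V \<omega>))\<^sup>2) \<partial>\<Omega>) + ennreal (\<sigma>\<^sup>2)"
    by (simp add: nn_integral_add \<Omega>.emeasure_space_1)
  also have "\<dots> \<le> ennreal (real m * \<sigma>\<^sup>2) + ennreal (\<sigma>\<^sup>2)"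
    using Suc.IH unfolding V_def by (rule add_right_mono)
  also have "\<dots> = ennreal (real (Suc m) * \<sigma>\<^sup>2)"
    by (simp add: ennreal_plus[symmetric] algebra_simps del: ennreal_plus)
  finally show ?case .
qed simp

lemma grad_sq_split_le: "grad_sq t \<le> 2 * eval_grad_sq t + 2 * drift_sq t"
proof -
  have "grad_sq t \<le> (\<integral>\<^sup>+\<omega>. 2 * ennreal ((norm (df (eval_point t \<omega>)))\<^sup>2)
      + 2 * ennreal ((norm (df (iterate t \<omega>) - df (eval_point t \<omega>)))\<^sup>2) \<partial>\<Omega>)"
    unfolding grad_sq_def
  proof (intro nn_integral_mono)
    fix \<omega>
    have "(norm (df (iterate t \<omega>)))\<^sup>2
        \<le> 2 * (norm (df (eval_point t \<omega>)))\<^sup>2 + 2 * (norm (df (iterate t \<omega>) - df (eval_point t \<omega>)))\<^sup>2"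
      using norm_add_sq_le[of "df (eval_point t \<omega>)" "df (iterate t \<omega>) - df (eval_point t \<omega>)"] by simp
    then have "ennreal ((norm (df (iterate t \<omega>)))\<^sup>2) \<le> ennreal (2 * (norm (df (eval_point t \<omega>)))\<^sup>2
        + 2 * (norm (df (iterate t \<omega>) - df (eval_point t \<omega>)))\<^sup>2)"
      by (rule ennreal_leI)
    then show "ennreal ((norm (df (iterate t \<omega>)))\<^sup>2) \<le> 2 * ennreal ((norm (df (eval_point t \<omega>)))\<^sup>2)
        + 2 * ennreal ((norm (df (iterate t \<omega>) - df (eval_point t \<omega>)))\<^sup>2)"
      by (simp add: ennreal_mult')
  qed
  also have "\<dots> = 2 * eval_grad_sq t + 2 * drift_sq t"
    by (simp add: eval_grad_sq_def drift_sq_def nn_integral_add nn_integral_cmult)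
  finally show ?thesis .
qed

lemma drift_pointwise_le:
  "(norm (df (iterate t \<omega>) - df (eval_point t \<omega>)))\<^sup>2
   \<le> 2 * L\<^sup>2 * \<gamma>\<^sup>2 * (real B - 1) * (\<Sum>r < t mod B. (norm (df (eval_point (t div B * B + r) \<omega>)))\<^sup>2)
     + 2 * L\<^sup>2 * \<gamma>\<^sup>2 * (norm (\<Sum>r < step_offset t. noise (t div B * B + r) \<omega>))\<^sup>2"
proof -
  let ?c = "step_offset t" and ?s = "t div B * B"
  define G where "G = (\<Sum>r < ?c. df (eval_point (?s + r) \<omega>))"
  define N where "N = (\<Sum>r < ?c. noise (?s + r) \<omega>)"
  have "?c \<le> t mod B" "t mod B \<le> B - 1"
    using step_decomposition(3)[of t] div_mult_mod_eq[of t B] B_pos by (linarith, simp add: less_Suc_eq_le[symmetric])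
  have "(norm (df (iterate t \<omega>) - df (eval_point t \<omega>)))\<^sup>2 \<le> (L * norm (iterate t \<omega> - eval_point t \<omega>))\<^sup>2"
    using lipschitz by (simp add: power_mono)
  also have "\<dots> = L\<^sup>2 * \<gamma>\<^sup>2 * (norm (G + N))\<^sup>2"
    using \<gamma>_pos
    by (simp add: iterate_minus_eval_point G_def N_def noise_def sum.distrib[symmetric] power_mult_distrib)
  also have "\<dots> \<le> L\<^sup>2 * \<gamma>\<^sup>2 * (2 * (norm G)\<^sup>2 + 2 * (norm N)\<^sup>2)"
    by (intro mult_left_mono norm_add_sq_le) simp
  finally have drift_le: "(norm (df (iterate t \<omega>) - df (eval_point t \<omega>)))\<^sup>2
      \<le> 2 * L\<^sup>2 * \<gamma>\<^sup>2 * (norm G)\<^sup>2 + 2 * L\<^sup>2 * \<gamma>\<^sup>2 * (norm N)\<^sup>2"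
    by (simp add: algebra_simps)
  have "(norm G)\<^sup>2 \<le> real ?c * (\<Sum>r < ?c. (norm (df (eval_point (?s + r) \<omega>)))\<^sup>2)"
    unfolding G_def by (rule norm_sum_sq_le)
  also have "\<dots> \<le> (real B - 1) * (\<Sum>r < t mod B. (norm (df (eval_point (?s + r) \<omega>)))\<^sup>2)"
    using \<open>?c \<le> t mod B\<close> \<open>t mod B \<le> B - 1\<close> B_pos
    by (intro mult_mono sum_mono2) (auto simp: sum_nonneg)
  finally have "2 * L\<^sup>2 * \<gamma>\<^sup>2 * (norm G)\<^sup>2
      \<le> 2 * L\<^sup>2 * \<gamma>\<^sup>2 * ((real B - 1) * (\<Sum>r < t mod B. (norm (df (eval_point (?s + r) \<omega>)))\<^sup>2))"
    by (rule mult_left_mono) simp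
  with drift_le show ?thesis
    unfolding N_def by (simp add: mult.assoc)
qed

lemma drift_sq_le:
  "drift_sq t \<le> ennreal (2 * L\<^sup>2 * \<gamma>\<^sup>2 * (real B - 1)) * (\<Sum>r < t mod B. eval_grad_sq (t div B * B + r))
     + ennreal (2 * L\<^sup>2 * \<gamma>\<^sup>2 * (real B - 1) * \<sigma>\<^sup>2)"
proof -
  interpret \<Omega>: prob_space \<Omega> by (rule \<Omega>_prob_space)
  define C where "C = 2 * L\<^sup>2 * \<gamma>\<^sup>2"
  define S where "S \<omega> = (\<Sum>r < t mod B. (norm (df (eval_point (t div B * B + r) \<omega>)))\<^sup>2)" for \<omega>
  define N where "N \<omega> = (norm (\<Sum>r < step_offset t. noise (t div B * B + r) \<omega>))\<^sup>2" for \<omega>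
  have [measurable]: "S \<in> borel_measurable \<Omega>" "N \<in> borel_measurable \<Omega>"
    unfolding S_def N_def noise_def by measurable
  have "0 \<le> real B - 1" "real (step_offset t) \<le> real B - 1"
    using B_pos step_decomposition(3)[of t] div_mult_mod_eq[of t B] mod_less_divisor[OF B_pos, of t]
    by linarith+
  have "drift_sq t \<le> (\<integral>\<^sup>+\<omega>. ennreal (C * (real B - 1)) * ennreal (S \<omega>) + ennreal C * ennreal (N \<omega>) \<partial>\<Omega>)"
    unfolding drift_sq_def
  proof (intro nn_integral_mono)
    fix \<omega>
    have "ennreal ((norm (df (iterate t \<omega>) - df (eval_point t \<omega>)))\<^sup>2) \<le> ennreal (C * (real B - 1) * S \<omega> + C * N \<omega>)"
      using drift_pointwise_le[of t \<omega>] by (intro ennreal_leI) (simp add: C_def S_def N_def)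
    also have "\<dots> = ennreal (C * (real B - 1)) * ennreal (S \<omega>) + ennreal C * ennreal (N \<omega>)"
      using \<open>0 \<le> real B - 1\<close>
      by (simp add: C_def S_def N_def ennreal_mult sum_nonneg)
    finally show "ennreal ((norm (df (iterate t \<omega>) - df (eval_point t \<omega>)))\<^sup>2)
        \<le> ennreal (C * (real B - 1)) * ennreal (S \<omega>) + ennreal C * ennreal (N \<omega>)" .
  qed
  also have "\<dots> = ennreal (C * (real B - 1)) * (\<integral>\<^sup>+\<omega>. ennreal (S \<omega>) \<partial>\<Omega>)
      + ennreal C * (\<integral>\<^sup>+\<omega>. ennreal (N \<omega>) \<partial>\<Omega>)"
    by (simp add: nn_integral_add nn_integral_cmult)
  also have "(\<integral>\<^sup>+\<omega>. ennreal (S \<omega>) \<partial>\<Omega>) = (\<Sum>r < t mod B. eval_grad_sq (t div B * B + r))"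
    unfolding S_def eval_grad_sq_def
    by (simp add: sum_ennreal[symmetric] nn_integral_sum del: sum_ennreal)
  also have "ennreal C * (\<integral>\<^sup>+\<omega>. ennreal (N \<omega>) \<partial>\<Omega>) \<le> ennreal C * ennreal (real (step_offset t) * \<sigma>\<^sup>2)"
    unfolding N_def by (intro mult_left_mono noise_sum_sq_le) simp
  also have "\<dots> \<le> ennreal (C * (real B - 1) * \<sigma>\<^sup>2)"
    using \<open>real (step_offset t) \<le> real B - 1\<close>
    by (simp add: C_def ennreal_mult[symmetric] mult_left_mono mult_right_mono)
  finally show ?thesis
    by (simp add: C_def add_mono)
qed

lemma gap_telescope:
  "gap T + (\<Sum>t<T. ennreal (\<gamma> / 2) * grad_sq t + ennreal (\<gamma> / 2 * (1 - L * \<gamma>)) * eval_grad_sq t)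
   \<le> gap 0 + (\<Sum>t<T. ennreal (\<gamma> / 2) * drift_sq t + ennreal (L * \<gamma>\<^sup>2 * \<sigma>\<^sup>2 / 2))"
proof (induction T)
  case (Suc T)
  have "gap (Suc T) + (\<Sum>t<Suc T. ennreal (\<gamma> / 2) * grad_sq t + ennreal (\<gamma> / 2 * (1 - L * \<gamma>)) * eval_grad_sq t)
      = (gap (Suc T) + ennreal (\<gamma> / 2) * grad_sq T + ennreal (\<gamma> / 2 * (1 - L * \<gamma>)) * eval_grad_sq T)
        + (\<Sum>t<T. ennreal (\<gamma> / 2) * grad_sq t + ennreal (\<gamma> / 2 * (1 - L * \<gamma>)) * eval_grad_sq t)"
    by (simp add: ac_simps)
  also have "\<dots> \<le> (gap T + ennreal (\<gamma> / 2) * drift_sq T + ennreal (L * \<gamma>\<^sup>2 * \<sigma>\<^sup>2 / 2))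
        + (\<Sum>t<T. ennreal (\<gamma> / 2) * grad_sq t + ennreal (\<gamma> / 2 * (1 - L * \<gamma>)) * eval_grad_sq t)"
    by (intro add_right_mono gap_Suc_le)
  also have "\<dots> = (gap T + (\<Sum>t<T. ennreal (\<gamma> / 2) * grad_sq t + ennreal (\<gamma> / 2 * (1 - L * \<gamma>)) * eval_grad_sq t))
        + (ennreal (\<gamma> / 2) * drift_sq T + ennreal (L * \<gamma>\<^sup>2 * \<sigma>\<^sup>2 / 2))"
    by (simp add: ac_simps)
  also have "\<dots> \<le> gap 0 + (\<Sum>t<Suc T. ennreal (\<gamma> / 2) * drift_sq t + ennreal (L * \<gamma>\<^sup>2 * \<sigma>\<^sup>2 / 2))"
    using add_right_mono[OF Suc.IH] by (simp add: ac_simps)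
  finally show ?case .
qed simp

lemma drift_sq_finite_if_earlier:
  "(\<And>s. s < t \<Longrightarrow> eval_grad_sq s < top) \<Longrightarrow> drift_sq t < top"
proof -
  assume earlier: "\<And>s. s < t \<Longrightarrow> eval_grad_sq s < top"
  have "t div B * B + r < t" if "r < t mod B" for r
    using that div_mult_mod_eq[of t B] by linarith
  then have "(\<Sum>r < t mod B. eval_grad_sq (t div B * B + r)) < top"
    using earlier by simp
  then show ?thesis
    using drift_sq_le[of t] by (simp add: ennreal_mult_less_top order.strict_trans1)
qed

(* Finiteness is needed to pass to real numbers; it holds by induction because drift_sq t only
   involves eval_grad_sq at earlier steps. *)

lemma eval_grad_sq_finite: "eval_grad_sq t < top"
proof (induction t rule: less_induct)
  case (less t)
  have "drift_sq s < top" if "s \<le> t" for s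
    using drift_sq_finite_if_earlier less that by simp
  then have "gap 0 + (\<Sum>s<Suc t. ennreal (\<gamma> / 2) * drift_sq s + ennreal (L * \<gamma>\<^sup>2 * \<sigma>\<^sup>2 / 2)) < top"
    by (simp add: gap_0 ennreal_mult_less_top)
  moreover have "ennreal (\<gamma> / 2 * (1 - L * \<gamma>)) * eval_grad_sq t
      \<le> gap (Suc t) + (\<Sum>s<Suc t. ennreal (\<gamma> / 2) * grad_sq s + ennreal (\<gamma> / 2 * (1 - L * \<gamma>)) * eval_grad_sq s)"
  proof -
    have "ennreal (\<gamma> / 2 * (1 - L * \<gamma>)) * eval_grad_sq t
        \<le> ennreal (\<gamma> / 2) * grad_sq t + ennreal (\<gamma> / 2 * (1 - L * \<gamma>)) * eval_grad_sq t"
      by simp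
    also have "\<dots> \<le> (\<Sum>s<Suc t. ennreal (\<gamma> / 2) * grad_sq s + ennreal (\<gamma> / 2 * (1 - L * \<gamma>)) * eval_grad_sq s)"
      by (rule member_le_sum) simp_all
    finally show ?thesis
      by (simp add: add_increasing)
  qed
  ultimately have "ennreal (\<gamma> / 2 * (1 - L * \<gamma>)) * eval_grad_sq t < top"
    using gap_telescope[of "Suc t"] by (meson order.strict_trans1)
  moreover have "0 < \<gamma> / 2 * (1 - L * \<gamma>)"
    using \<gamma>_pos L_\<gamma>_le by simp
  ultimately show ?case
    by (auto simp: ennreal_mult_less_top top.not_eq_extremum)
qed

lemma drift_sq_finite: "drift_sq t < top"
  using drift_sq_finite_if_earlier eval_grad_sq_finite by blast

lemma grad_sq_finite: "grad_sq t < top"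
  using grad_sq_split_le[of t] eval_grad_sq_finite[of t] drift_sq_finite[of t]
  by (simp add: ennreal_mult_less_top order.strict_trans1)

lemma sum_grad_sq_eq_ennreal: "(\<Sum>t<K. grad_sq t) = ennreal (\<Sum>t<K. enn2real (grad_sq t))"
  using grad_sq_finite by (simp add: sum_ennreal[symmetric] del: sum_ennreal)

lemma sum_descent_inequality:
  "\<gamma> / 2 * (\<Sum>t<K. enn2real (grad_sq t)) + \<gamma> / 2 * (1 - L * \<gamma>) * (\<Sum>t<K. enn2real (eval_grad_sq t))
   \<le> (f w0 - fstar) + \<gamma> / 2 * (\<Sum>t<K. enn2real (drift_sq t)) + real K * (L * \<gamma>\<^sup>2 * \<sigma>\<^sup>2 / 2)"
proof -
  have "(\<Sum>t<K. ennreal (\<gamma> / 2) * grad_sq t + ennreal (\<gamma> / 2 * (1 - L * \<gamma>)) * eval_grad_sq t)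
      \<le> gap 0 + (\<Sum>t<K. ennreal (\<gamma> / 2) * drift_sq t + ennreal (L * \<gamma>\<^sup>2 * \<sigma>\<^sup>2 / 2))"
    by (rule order_trans[OF _ gap_telescope]) (rule add_increasing, simp_all)
  then have "enn2real (\<Sum>t<K. ennreal (\<gamma> / 2) * grad_sq t + ennreal (\<gamma> / 2 * (1 - L * \<gamma>)) * eval_grad_sq t)
      \<le> enn2real (gap 0 + (\<Sum>t<K. ennreal (\<gamma> / 2) * drift_sq t + ennreal (L * \<gamma>\<^sup>2 * \<sigma>\<^sup>2 / 2)))"
    by (rule enn2real_mono) (simp add: gap_0 drift_sq_finite ennreal_mult_less_top)
  then show ?thesis
    using \<gamma>_pos L_pos L_\<gamma>_le lower_bound[of w0]
    by (simp add: gap_0 enn2real_plus enn2real_sum enn2real_mult grad_sq_finite eval_grad_sq_finite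
        drift_sq_finite ennreal_mult_less_top of_nat_less_top sum.distrib sum_distrib_left o_def)
qed

lemma sum_grad_sq_split_le:
  "(\<Sum>t<K. enn2real (grad_sq t)) \<le> 2 * (\<Sum>t<K. enn2real (eval_grad_sq t)) + 2 * (\<Sum>t<K. enn2real (drift_sq t))"
proof -
  have "enn2real (grad_sq t) \<le> 2 * enn2real (eval_grad_sq t) + 2 * enn2real (drift_sq t)" for t
    using enn2real_mono[OF grad_sq_split_le[of t]] eval_grad_sq_finite[of t] drift_sq_finite[of t]
    by (simp add: enn2real_plus enn2real_mult ennreal_mult_less_top)
  then show ?thesis
    by (simp add: sum_mono sum.distrib[symmetric] sum_distrib_left)
qed

lemma sum_drift_sq_le:
  "(\<Sum>t<K. enn2real (drift_sq t))
   \<le> 2 * L\<^sup>2 * \<gamma>\<^sup>2 * (real B - 1)\<^sup>2 * (\<Sum>t<K. enn2real (eval_grad_sq t))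
     + 2 * L\<^sup>2 * \<gamma>\<^sup>2 * (real B - 1) * real K * \<sigma>\<^sup>2"
proof -
  define C where "C = 2 * L\<^sup>2 * \<gamma>\<^sup>2 * (real B - 1)"
  have "0 \<le> C"
    using B_pos by (simp add: C_def)
  have "enn2real (drift_sq t) \<le> C * (\<Sum>r < t mod B. enn2real (eval_grad_sq (t div B * B + r))) + C * \<sigma>\<^sup>2" for t
    using enn2real_mono[OF drift_sq_le[of t]] \<open>0 \<le> C\<close>
    by (simp add: C_def enn2real_plus enn2real_mult enn2real_sum eval_grad_sq_finite ennreal_mult_less_top o_def)
  then have "(\<Sum>t<K. enn2real (drift_sq t))
      \<le> (\<Sum>t<K. C * (\<Sum>r < t mod B. enn2real (eval_grad_sq (t div B * B + r))) + C * \<sigma>\<^sup>2)"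
    by (rule sum_mono)
  also have "\<dots> = C * (\<Sum>t<K. \<Sum>r < t mod B. enn2real (eval_grad_sq (t div B * B + r))) + real K * C * \<sigma>\<^sup>2"
    by (simp add: sum.distrib sum_distrib_left)
  also have "\<dots> \<le> C * ((real B - 1) * (\<Sum>t<K. enn2real (eval_grad_sq t))) + real K * C * \<sigma>\<^sup>2"
    using sum_earlier_in_block_le[of "\<lambda>t. enn2real (eval_grad_sq t)", OF _ B_pos] \<open>0 \<le> C\<close>
    by (simp add: mult_left_mono)
  finally show ?thesis
    by (simp add: C_def power2_eq_square algebra_simps)
qed

lemma sum_grad_sq_le:
  assumes "0 < \<epsilon>" "4 * \<sigma>\<^sup>2 * L * \<gamma> \<le> \<epsilon>"
    and saturated: "2 * real B * L * \<gamma> = 1 \<or> 4 * \<sigma>\<^sup>2 * L * \<gamma> = \<epsilon>"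
    and K_large: "4 * real B * L * (f w0 - fstar) / \<epsilon> + 8 * \<sigma>\<^sup>2 * L * (f w0 - fstar) / \<epsilon>\<^sup>2 \<le> real K"
  shows "(\<Sum>t<K. enn2real (grad_sq t)) \<le> real K * \<epsilon>"
proof -
  let ?A = "\<Sum>t<K. enn2real (grad_sq t)" and ?Bs = "\<Sum>t<K. enn2real (eval_grad_sq t)"
    and ?E = "\<Sum>t<K. enn2real (drift_sq t)" and ?\<Delta> = "f w0 - fstar"
  let ?p = "\<gamma> * L * (real B - 1)" and ?q = "\<gamma> * L" and ?v = "\<gamma> * L * \<sigma>\<^sup>2 / \<epsilon>"
  have "?p + ?q = \<gamma> * L * real B"
    by (simp add: algebra_simps)
  have "\<gamma> * ?A \<le> \<gamma> * (real K * \<epsilon>)"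
  proof (rule recursions_imply_bound[where Y = "\<gamma> * ?Bs" and Z = "\<gamma> * ?E" and \<Delta> = ?\<Delta>
        and p = ?p and q = ?q and v = ?v])
    show "0 \<le> \<gamma> * ?Bs" "0 \<le> \<gamma> * (real K * \<epsilon>)" "0 \<le> ?p" "0 \<le> ?q" "0 \<le> ?v"
      using \<gamma>_pos L_pos B_pos \<open>0 < \<epsilon>\<close> by (simp_all add: sum_nonneg)
    show "?p + ?q \<le> 1/2" "?v \<le> 1/4" "?p + ?q = 1/2 \<or> ?v = 1/4"
      using \<gamma>_le assms(2) saturated \<open>0 < \<epsilon>\<close> unfolding \<open>?p + ?q = \<gamma> * L * real B\<close>
      by (auto simp: field_simps)
    show "\<gamma> * ?A + (1 - ?q) * (\<gamma> * ?Bs) \<le> 2 * ?\<Delta> + \<gamma> * ?E + ?v * (\<gamma> * (real K * \<epsilon>))"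
      using sum_descent_inequality[of K] \<open>0 < \<epsilon>\<close> by (simp add: field_simps power2_eq_square)
    show "\<gamma> * ?A \<le> 2 * (\<gamma> * ?Bs) + 2 * (\<gamma> * ?E)"
      using mult_left_mono[OF sum_grad_sq_split_le[of K], of \<gamma>] \<gamma>_pos by (simp add: algebra_simps)
    show "\<gamma> * ?E \<le> 2 * ?p\<^sup>2 * (\<gamma> * ?Bs) + 2 * ?p * (?v * (\<gamma> * (real K * \<epsilon>)))"
      using mult_left_mono[OF sum_drift_sq_le[of K], of \<gamma>] \<gamma>_pos \<open>0 < \<epsilon>\<close>
      by (simp add: field_simps power2_eq_square)
    show "2 * ?\<Delta> * (2 * (?p + ?q) + 4 * ?v) \<le> \<gamma> * (real K * \<epsilon>)"
    proof -
      have "2 * ?\<Delta> * (2 * (?p + ?q) + 4 * ?v)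
          = \<gamma> * \<epsilon> * (4 * real B * L * ?\<Delta> / \<epsilon> + 8 * \<sigma>\<^sup>2 * L * ?\<Delta> / \<epsilon>\<^sup>2)"
        unfolding \<open>?p + ?q = \<gamma> * L * real B\<close> using \<open>0 < \<epsilon>\<close>
        by (simp add: field_simps power2_eq_square)
      also have "\<dots> \<le> \<gamma> * \<epsilon> * real K"
        using K_large \<gamma>_pos \<open>0 < \<epsilon>\<close> by (intro mult_left_mono) simp_all
      finally show ?thesis
        by (simp add: ac_simps)
    qed
  qed
  then show ?thesis
    using \<gamma>_pos by simp
qed

end

section \<open>The step size and the main result\<close>

lemma lsgd_stepsize_properties:
  fixes B :: nat and L \<sigma> \<epsilon> :: real
  assumes "0 < B" "0 < L" "0 < \<epsilon>"
  defines "\<gamma> \<equiv> lsgd_stepsize B L \<sigma> \<epsilon>"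
  shows "0 < \<gamma>" "2 * real B * L * \<gamma> \<le> 1" "4 * \<sigma>\<^sup>2 * L * \<gamma> \<le> \<epsilon>"
    "2 * real B * L * \<gamma> = 1 \<or> 4 * \<sigma>\<^sup>2 * L * \<gamma> = \<epsilon>"
proof -
  have "0 < 2 * real B * L"
    using assms(1,2) by simp
  have \<gamma>_cases: "\<gamma> = 1 / (2 * real B * L) \<or> (0 < \<sigma>\<^sup>2 \<and> \<gamma> = \<epsilon> / (4 * \<sigma>\<^sup>2 * L))"
    by (auto simp: \<gamma>_def lsgd_stepsize_def min_def)
  have "\<gamma> \<le> 1 / (2 * real B * L)"
    by (simp add: \<gamma>_def lsgd_stepsize_def)
  then show "2 * real B * L * \<gamma> \<le> 1"
    using \<open>0 < 2 * real B * L\<close> by (simp add: le_divide_eq mult.commute)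
  show "4 * \<sigma>\<^sup>2 * L * \<gamma> \<le> \<epsilon>"
  proof (cases "\<sigma>\<^sup>2 = 0")
    case False
    then have "0 < 4 * \<sigma>\<^sup>2 * L" "\<gamma> \<le> \<epsilon> / (4 * \<sigma>\<^sup>2 * L)"
      using assms(2) by (simp_all add: \<gamma>_def lsgd_stepsize_def)
    then show ?thesis
      by (simp add: le_divide_eq mult.commute)
  qed (use assms(3) in simp)
  show "0 < \<gamma>"
    using \<gamma>_cases \<open>0 < 2 * real B * L\<close> assms(2,3) by auto
  show "2 * real B * L * \<gamma> = 1 \<or> 4 * \<sigma>\<^sup>2 * L * \<gamma> = \<epsilon>"
    using \<gamma>_cases assms(1,2) by auto
qed

theorem theoremE3:
  fixes f :: "'a::euclidean_space \<Rightarrow> real" and df :: "'a \<Rightarrow> 'a"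
    and L fstar \<sigma> \<epsilon> :: real
    and D :: "'b measure" and g :: "'a \<Rightarrow> 'b \<Rightarrow> 'a"
    and n B K :: nat and M :: "nat \<Rightarrow> nat \<Rightarrow> nat" and w0 :: 'a
  assumes diff: "\<forall>x. (f has_derivative (\<lambda>h. df x \<bullet> h)) (at x)"
    and smooth: "\<forall>x y. norm (df x - df y) \<le> L * norm (x - y)"
    and Lpos: "L > 0"
    and lower: "\<forall>x. fstar \<le> f x"
    and prob: "prob_space D"
    and meas: "case_prod g \<in> borel_measurable (borel \<Otimes>\<^sub>M D)"
    and unbiased: "\<forall>x. integrable D (g x) \<and> (\<integral>\<xi>. g x \<xi> \<partial>D) = df x"
    and variance: "\<forall>x. (\<integral>\<^sup>+\<xi>. ennreal ((norm (g x \<xi> - df x))\<^sup>2) \<partial>D) \<le> ennreal (\<sigma>\<^sup>2)"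
    and n_pos: "n \<ge> 1" and B_pos: "B \<ge> 1"
    and Msum: "\<forall>k. (\<Sum>i<n. M k i) = B"
    and eps_pos: "\<epsilon> > 0"
    and K_large: "real K \<ge> 4 * real B * L * (f w0 - fstar) / \<epsilon>
                           + 8 * \<sigma>\<^sup>2 * L * (f w0 - fstar) / \<epsilon>\<^sup>2"
  shows "ennreal (1 / real K) *
           (\<Sum>t<K. \<integral>\<^sup>+\<omega>. ennreal ((norm (df (main_branch g (lsgd_stepsize B L \<sigma> \<epsilon>) n M B w0 \<omega> t)))\<^sup>2)
                     \<partial>(PiM UNIV (\<lambda>_::nat \<times> nat \<times> nat. D)))
         \<le> ennreal \<epsilon>"
proof -
  define \<gamma> where "\<gamma> = lsgd_stepsize B L \<sigma> \<epsilon>"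
  have "0 < B"
    using B_pos by simp
  note step_size = lsgd_stepsize_properties[OF \<open>0 < B\<close> Lpos eps_pos, where \<sigma> = \<sigma>, folded \<gamma>_def]
  interpret local_sgd D f df L fstar \<sigma> g n B M w0 \<gamma>
    by (intro local_sgd.intro smooth_stochastic_problem.intro smooth_stochastic_problem_axioms.intro
        local_sgd_axioms.intro prob)
      (simp_all add: diff smooth Lpos lower meas unbiased variance Msum \<open>0 < B\<close> step_size)
  have sum_eq: "(\<Sum>t<K. \<integral>\<^sup>+\<omega>. ennreal ((norm (df (main_branch g \<gamma> n M B w0 \<omega> t)))\<^sup>2) \<partial>\<Omega>)
      = ennreal (\<Sum>t<K. enn2real (grad_sq t))"
    using sum_grad_sq_eq_ennreal by (simp add: grad_sq_def iterate_def)
  have "(\<Sum>t<K. enn2real (grad_sq t)) \<le> real K * \<epsilon>"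
    using step_size eps_pos K_large by (intro sum_grad_sq_le) simp_all
  then have "(\<Sum>t<K. enn2real (grad_sq t)) / real K \<le> \<epsilon>"
    using eps_pos by (cases "K = 0") (simp_all add: divide_le_eq mult.commute)
  then show ?thesis
    unfolding \<gamma>_def[symmetric] sum_eq
    by (simp add: ennreal_mult'[symmetric] ennreal_leI)
qed

end
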